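(* If $(G_2;\mathcal{B},\mathcal{S})$ is a benign planar tumor graph on $n$ vertices, then there exists an edge probability measure $\mu$ on the complete graph with vertex set $\mathcal{B}$ such that \begin{align*} \mathrm{cyc}_5(G_2;\mathcal{B},\mathcal{S}) &\le\Bigl(2\sum_{e\in\operatorname{supp}\mu}\mu(e)^2+\beta(\mu;P_3)\Bigr)n^2,\quad\text{and}\\ \mathrm{cyc}_{2m+1}(G_2;\mathcal{B},\mathcal{S}) &\le\bigl(2m\cdot\beta(\mu;C_m)+\beta(\mu;P_{m+1})\bigr)n^m\quad\text{for } m\ge 3. \end{align*}
   Context: A tumor graph is a triple $(G;\mathcal{B},\mathcal{S})$ where $G$ is a graph, $V(G)=\mathcal{B}\sqcup\mathcal{S}$, and every vertex in $\mathcal{S}$ has at most two neighbors in $\mathcal{B}$; it is planar if $G$ is planar. For distinct $x,y\in\mathcal{B}$, the tumor $\mathcal{S}_{xy}=\{s\in\mathcal{S}:N(s)\cap\mathcal{B}=\{x,y\}\}$; the tumor graph is benign if every edge $uv$ with $u,v\in\mathcal{S}$ has $u,v\in\mathcal{S}_{xy}$ for some distinct $x,y\in\mathcal{B}$. A copy of the cycle $C_{2m+1}$ is good if its vertices can be cyclically labeled $v_1,\dots,v_{2m+1}$ with $v_1,v_3,\dots,v_{2m-1}\in\mathcal{B}$ and $v_2,\dots,v_{2m}\in\mathcal{S}$ (and $v_{2m+1}$ arbitrary); $\mathrm{cyc}_{2m+1}(G;\mathcal{B},\mathcal{S})$ is their number. $P_k$ is the path on $k$ vertices. An edge probability measure on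 a complete graph $K$ is a probability measure $\mu$ on $E(K)$; $\operatorname{supp}\mu$ is the set of edges of positive mass; $\mu(H')=\prod_{e\in E(H')}\mu(e)$ for $H'\subseteq K$; and $\beta(\mu;H)=\sum_{H'}\mu(H')$ over all subgraphs $H'$ of $K$ isomorphic to $H$. *)

theory Defs
  imports "HOL-Analysis.Analysis" "HOL-Probability.Probability_Mass_Function"
begin

definition simple_graph :: "'a set \<Rightarrow> 'a set set \<Rightarrow> bool" where
  "simple_graph V E \<longleftrightarrow> finite V \<and> (\<forall>e\<in>E. e \<subseteq> V \<and> card e = 2)"

definition nbrs :: "'a set set \<Rightarrow> 'a \<Rightarrow> 'a set" where
  "nbrs E v = {u. {u, v} \<in> E}"

definition planar_graph :: "'a set \<Rightarrow> 'a set set \<Rightarrow> bool" where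
  "planar_graph V E \<longleftrightarrow>
     (\<exists>(p :: 'a \<Rightarrow> complex) (\<gamma> :: 'a set \<Rightarrow> real \<Rightarrow> complex).
        inj_on p V \<and>
        (\<forall>e\<in>E. arc (\<gamma> e) \<and> {pathstart (\<gamma> e), pathfinish (\<gamma> e)} = p ` e
                \<and> path_image (\<gamma> e) \<inter> p ` V = p ` e) \<and>
        (\<forall>e\<in>E. \<forall>e'\<in>E. e \<noteq> e' \<longrightarrow> path_image (\<gamma> e) \<inter> path_image (\<gamma> e') \<subseteq> p ` (e \<inter> e')))"

definition tumor_graph :: "'a set \<Rightarrow> 'a set set \<Rightarrow> 'a set \<Rightarrow> 'a set \<Rightarrow> bool" where
  "tumor_graph V E B S \<longleftrightarrow> simple_graph V E \<and> B \<union> S = V \<and> B \<inter> S = {}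
     \<and> (\<forall>s\<in>S. card (nbrs E s \<inter> B) \<le> 2)"

definition tumor :: "'a set set \<Rightarrow> 'a set \<Rightarrow> 'a set \<Rightarrow> 'a \<Rightarrow> 'a \<Rightarrow> 'a set" where
  "tumor E B S x y = {s\<in>S. nbrs E s \<inter> B = {x, y}}"

definition benign :: "'a set \<Rightarrow> 'a set set \<Rightarrow> 'a set \<Rightarrow> 'a set \<Rightarrow> bool" where
  "benign V E B S \<longleftrightarrow> (\<forall>u v. {u, v} \<in> E \<and> u \<in> S \<and> v \<in> S \<longrightarrow>
     (\<exists>x\<in>B. \<exists>y\<in>B. x \<noteq> y \<and> u \<in> tumor E B S x y \<and> v \<in> tumor E B S x y))"

definition cycle_edges :: "nat \<Rightarrow> (nat \<Rightarrow> 'a) \<Rightarrow> 'a set set" where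
  "cycle_edges k v = {{v i, v ((i + 1) mod k)} | i. i < k}"

definition path_edges :: "nat \<Rightarrow> (nat \<Rightarrow> 'a) \<Rightarrow> 'a set set" where
  "path_edges k v = {{v i, v (i + 1)} | i. i + 1 < k}"

text \<open>Good copies of C_(2m+1) (as subgraphs, determined by their edge sets); labels
  0-indexed: v 0, v 2, ..., v (2m-2) in B; v 1, v 3, ..., v (2m-1) in S; v (2m) arbitrary.\<close>
definition good_cycles :: "'a set \<Rightarrow> 'a set set \<Rightarrow> 'a set \<Rightarrow> 'a set \<Rightarrow> nat \<Rightarrow> 'a set set set" where
  "good_cycles V E B S m = {C. C \<subseteq> E \<and> (\<exists>v. inj_on v {0..<2*m+1} \<and> v ` {0..<2*m+1} \<subseteq> V
      \<and> C = cycle_edges (2*m+1) v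
      \<and> (\<forall>i<2*m. even i \<longrightarrow> v i \<in> B) \<and> (\<forall>i<2*m. odd i \<longrightarrow> v i \<in> S))}"

definition cyc :: "'a set \<Rightarrow> 'a set set \<Rightarrow> 'a set \<Rightarrow> 'a set \<Rightarrow> nat \<Rightarrow> nat" where
  "cyc V E B S m = card (good_cycles V E B S m)"

definition complete_edges :: "'a set \<Rightarrow> 'a set set" where
  "complete_edges B = {e. e \<subseteq> B \<and> card e = 2}"

definition path_copies :: "'a set \<Rightarrow> nat \<Rightarrow> 'a set set set" where
  "path_copies B k = {path_edges k v | v. inj_on v {0..<k} \<and> v ` {0..<k} \<subseteq> B}"

definition cycle_copies :: "'a set \<Rightarrow> nat \<Rightarrow> 'a set set set" where
  "cycle_copies B k = {cycle_edges k v | v. inj_on v {0..<k} \<and> v ` {0..<k} \<subseteq> B}"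

definition beta :: "'a set pmf \<Rightarrow> 'a set set set \<Rightarrow> real" where
  "beta \<mu> Hs = (\<Sum>H'\<in>Hs. \<Prod>e\<in>H'. pmf \<mu> e)"

end

(* A good (2m+1)-cycle v_0 ... v_2m alternates between B and S except possibly at v_2m.
   Contracting each S-vertex v_(2i+1) onto the B-edge {v_2i, v_(2i+2)} of its tumor leaves a path
   on m+1 vertices of B if v_2m lies in B.  If v_2m lies in S, benignity puts v_(2m-1) and v_2m
   into the tumor over {v_(2m-2), v_0}, and what is left is a cycle on m vertices of B (an edge
   if m = 2) one of whose edges is replaced by a detour through two adjacent tumor vertices.
   The good cycle is recovered from this code, so good cycles are counted by sums of products
   of tumor sizes.  Planarity enters only in that a vertex of a tumor has at most two
   neighbours in it, since three would span a K_{3,3} together with the two base vertices;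
   so a tumor of size t carries at most 2t detours.  Taking mu(e) proportional to the size of
   the tumor over e turns the products of tumor sizes into n^m times the mu-weights of the
   paths and cycles. *)

theory Submission
  imports Defs
begin

section \<open>Arcs and Jordan curves\<close>

lemma connected_subset_inside:
  assumes "connected T" "T \<inter> K = {}" "p \<in> T" "p \<in> inside K"
  shows "T \<subseteq> inside K"
  using inside_outside_intersect_connected[OF assms(1), of K] assms(2-4) inside_Un_outside[of K]
  by blast

lemma connected_subset_outside:
  assumes "connected T" "T \<inter> K = {}" "p \<in> T" "p \<in> outside K"
  shows "T \<subseteq> outside K"
  using inside_outside_intersect_connected[OF assms(1), of K] assms(2-4) inside_Un_outside[of K]
  by blast

lemma arc_image_disjoint_inside:
  fixes h :: "real \<Rightarrow> 'a::real_normed_vector"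
  assumes h: "arc h" and meet: "path_image h \<inter> K \<subseteq> {pathstart h}"
    and out: "pathfinish h \<in> outside K"
  shows "path_image h \<inter> inside K = {}"
proof (rule ccontr)
  assume "path_image h \<inter> inside K \<noteq> {}"
  then obtain t where t: "t \<in> {0..1}" "h t \<in> inside K"
    unfolding path_image_def by blast
  have "h ` {t..1} \<inter> K = {}"
  proof (rule ccontr)
    assume "h ` {t..1} \<inter> K \<noteq> {}"
    then obtain u where u: "u \<in> {t..1}" "h u \<in> K" by blast
    moreover have "h u \<in> path_image h"
      using u t unfolding path_image_def by auto
    ultimately have "h u = h 0"
      using meet unfolding pathstart_def by blast
    then have "u = 0"
      using arc_imp_inj_on[OF h] u t by (auto dest: inj_onD)
    then have "h t \<in> K"
      using u t by auto
    then show False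
      using t(2) inside_no_overlap[of K] by blast
  qed
  moreover have "connected (h ` {t..1})"
    using t arc_imp_path[OF h] unfolding path_def
    by (intro connected_continuous_image) (auto intro: continuous_on_subset)
  ultimately have "h 1 \<in> inside K"
    using connected_subset_inside[of "h ` {t..1}" K "h t"] t by auto
  then show False
    using out inside_Int_outside[of K] unfolding pathfinish_def by blast
qed

text \<open>The unbounded set cannot enter the bounded inside, so the nonempty inside is covered by
  the other set.\<close>

lemma subset_inside_if_complement_cover:
  fixes K :: "'a::real_normed_vector set"
  assumes J: "bounded (inside K)" "inside K \<noteq> {}"
    and A: "connected A" "A \<inter> K = {}" and I: "connected I" "I \<inter> K = {}" "\<not> bounded I"
    and cover: "- K \<subseteq> A \<union> I"
  shows "A \<subseteq> inside K"
proof -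
  obtain p where p: "p \<in> I"
    using I(3) by fastforce
  have "p \<notin> inside K"
  proof
    assume "p \<in> inside K"
    then have "I \<subseteq> inside K"
      by (rule connected_subset_inside[OF I(1,2) p])
    then show False
      using I(3) J(1) bounded_subset by blast
  qed
  moreover have "p \<notin> K"
    using p I(2) by blast
  ultimately have "p \<in> outside K"
    by (simp add: outside_inside)
  then have I_out: "I \<subseteq> outside K"
    by (rule connected_subset_outside[OF I(1,2) p])
  obtain q where q: "q \<in> inside K"
    using J(2) by blast
  then have "q \<notin> K" "q \<notin> outside K"
    using inside_no_overlap[of K] inside_Int_outside[of K] by blast+
  then have "q \<in> A"
    using cover I_out by blast
  then show ?thesis
    by (rule connected_subset_inside[OF A _ q])
qed

section \<open>Inversion in a point\<close>

lemma inj_inversion: "inj (\<lambda>z::complex. 1 / (z - z0))"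
  by (rule injI) (metis divide_divide_eq_right div_by_1 mult_1 diff_add_cancel)

lemma continuous_on_inversion: "z0 \<notin> S \<Longrightarrow> continuous_on S (\<lambda>z::complex. 1 / (z - z0))"
  by (intro continuous_intros) auto

lemma unbounded_inversion_punctured:
  assumes "open U" "z0 \<in> U"
  shows "\<not> bounded ((\<lambda>z::complex. 1 / (z - z0)) ` (U - {z0}))"
proof
  assume "bounded ((\<lambda>z. 1 / (z - z0)) ` (U - {z0}))"
  then obtain M where M: "M > 0" "\<And>z. z \<in> U - {z0} \<Longrightarrow> norm (1 / (z - z0)) \<le> M"
    unfolding bounded_pos by auto
  obtain r where r: "r > 0" "ball z0 r \<subseteq> U"
    using assms open_contains_ball_eq by blast
  define d where "d = min (r / 2) (1 / (2 * M))"
  have d: "0 < d" "d < r" "d \<le> 1 / (2 * M)"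
    unfolding d_def using r M by auto
  have "z0 + of_real d \<in> U - {z0}"
    using d r by (auto simp: dist_norm)
  then have "1 / d \<le> M"
    using M(2)[of "z0 + of_real d"] d by (simp add: norm_divide)
  moreover have "2 * M \<le> 1 / d"
    using d M by (simp add: field_simps)
  ultimately show False
    using M by linarith
qed

lemma zero_in_closure_inversion_unbounded:
  assumes "\<not> bounded A"
  shows "0 \<in> closure ((\<lambda>z::complex. 1 / (z - z0)) ` A)"
  unfolding closure_approachable
proof (intro allI impI)
  fix e :: real
  assume e: "e > 0"
  obtain z where z: "z \<in> A" "norm z > norm z0 + 1 / e"
    using assms unfolding bounded_iff by (meson not_le)
  have "norm (z - z0) > 1 / e"
    using z norm_triangle_ineq2[of z z0] by linarith
  moreover have "1 / e > 0"
    using e by simp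
  ultimately have "norm (1 / (z - z0)) < e"
    using e by (simp add: norm_divide divide_less_eq mult.commute)
  then show "\<exists>y\<in>(\<lambda>z. 1 / (z - z0)) ` A. dist y 0 < e"
    using z by auto
qed

lemma connected_insert_zero_inversion:
  assumes "connected A" "\<not> bounded A" "z0 \<notin> A"
  shows "connected (insert 0 ((\<lambda>z::complex. 1 / (z - z0)) ` A))"
proof -
  let ?A' = "(\<lambda>z::complex. 1 / (z - z0)) ` A"
  have conn: "connected ?A'"
    by (rule connected_continuous_image[OF continuous_on_inversion]) (use assms in auto)
  have "0 \<in> closure ?A'"
    by (rule zero_in_closure_inversion_unbounded) (use assms in auto)
  then have "insert 0 ?A' \<subseteq> closure ?A'"
    using closure_subset[of ?A'] by blast
  then show ?thesis
    using connected_intermediate_closure[OF conn, of "insert 0 ?A'"] by blast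
qed

lemma inversion_complement_cover:
  fixes K :: "complex set"
  assumes "z0 \<notin> K"
  defines "f \<equiv> \<lambda>z. 1 / (z - z0)"
  shows "- f ` K \<subseteq> insert 0 (f ` outside K) \<union> f ` (inside K - {z0})"
proof
  fix w
  assume w: "w \<in> - f ` K"
  show "w \<in> insert 0 (f ` outside K) \<union> f ` (inside K - {z0})"
  proof (cases "w = 0")
    case False
    define z where "z = z0 + 1 / w"
    have z: "f z = w" "z \<noteq> z0"
      unfolding f_def z_def using False by simp_all
    have "z \<notin> K"
    proof
      assume "z \<in> K"
      then have "w \<in> f ` K"
        using z(1) by blast
      then show False
        using w by simp
    qed
    then have "z \<in> outside K \<or> z \<in> inside K"
      using inside_Un_outside[of K] by blast
    then show ?thesis
      using z by blast
  qed simp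
qed

text \<open>The inversion exchanges the two sides of a Jordan curve through which it is taken: the
  outside, completed by the image \<open>0\<close> of \<open>\<infinity>\<close>, goes inside, and the punctured inside goes to an
  unbounded set.\<close>

lemma inversion_outside_to_inside:
  fixes c :: "real \<Rightarrow> complex"
  assumes sp: "simple_path c" and loop: "pathfinish c = pathstart c"
    and z0: "z0 \<in> inside (path_image c)" and q: "q \<in> outside (path_image c)"
  defines "f \<equiv> \<lambda>z. 1 / (z - z0)"
  shows "f q \<in> inside (f ` path_image c)"
proof -
  define K where "K = path_image c"
  have injf: "inj f"
    unfolding f_def by (rule inj_inversion)
  have JK: "open (inside K)" "connected (inside K)" "connected (outside K)"
    "\<not> bounded (outside K)"
    using Jordan_inside_outside[OF sp loop] unfolding K_def by auto
  have z0K: "z0 \<notin> K" "z0 \<notin> outside K"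
    using z0 inside_no_overlap inside_Int_outside unfolding K_def by blast+
  have sp': "simple_path (f \<circ> c)"
    using sp z0K continuous_on_inversion[of z0 K] injf unfolding K_def f_def
    by (intro simple_path_continuous_image) (auto intro: inj_on_subset)
  have loop': "pathfinish (f \<circ> c) = pathstart (f \<circ> c)"
    using loop by (simp add: pathfinish_def pathstart_def)
  have J: "bounded (inside (f ` K))" "inside (f ` K) \<noteq> {}"
    using Jordan_inside_outside[OF sp' loop'] unfolding K_def path_image_compose by auto
  have "insert 0 (f ` outside K) \<subseteq> inside (f ` K)"
  proof (rule subset_inside_if_complement_cover[OF J])
    show "connected (insert 0 (f ` outside K))"
      unfolding f_def using JK z0K by (intro connected_insert_zero_inversion) auto
    have "0 \<notin> f ` K"
      using z0K(1) by (auto simp: f_def)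
    moreover have "f ` outside K \<inter> f ` K = {}"
      by (simp add: image_Int[OF injf, symmetric])
    ultimately show "insert 0 (f ` outside K) \<inter> f ` K = {}"
      by blast
    show "connected (f ` (inside K - {z0}))"
      unfolding f_def
      by (rule connected_continuous_image[OF continuous_on_inversion])
        (use JK in \<open>auto intro: connected_open_delete\<close>)
    show "f ` (inside K - {z0}) \<inter> f ` K = {}"
      unfolding image_Int[OF injf, symmetric] using inside_no_overlap[of K] by blast
    show "\<not> bounded (f ` (inside K - {z0}))"
      unfolding f_def using JK z0 unfolding K_def by (intro unbounded_inversion_punctured) auto
    show "- f ` K \<subseteq> insert 0 (f ` outside K) \<union> f ` (inside K - {z0})"
      unfolding f_def by (rule inversion_complement_cover[OF z0K(1)])
  qed
  then show ?thesis
    using q unfolding K_def by blast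
qed

section \<open>Non-planarity of \<open>K\<^sub>3\<^sub>,\<^sub>3\<close>\<close>

locale k33_drawing =
  fixes L R :: "nat \<Rightarrow> complex" and g :: "nat \<Rightarrow> nat \<Rightarrow> real \<Rightarrow> complex"
  assumes arc: "i < 3 \<Longrightarrow> j < 3 \<Longrightarrow> arc (g i j)"
    and start: "i < 3 \<Longrightarrow> j < 3 \<Longrightarrow> pathstart (g i j) = L i"
    and finish: "i < 3 \<Longrightarrow> j < 3 \<Longrightarrow> pathfinish (g i j) = R j"
    and L_on_arc: "i < 3 \<Longrightarrow> j < 3 \<Longrightarrow> k < 3 \<Longrightarrow> L k \<in> path_image (g i j) \<Longrightarrow> k = i"
    and R_on_arc: "i < 3 \<Longrightarrow> j < 3 \<Longrightarrow> k < 3 \<Longrightarrow> R k \<in> path_image (g i j) \<Longrightarrow> k = j"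
    and arcs_meet: "i < 3 \<Longrightarrow> j < 3 \<Longrightarrow> i' < 3 \<Longrightarrow> j' < 3 \<Longrightarrow> i \<noteq> i' \<or> j \<noteq> j' \<Longrightarrow>
      path_image (g i j) \<inter> path_image (g i' j')
        \<subseteq> (if i = i' then {L i} else {}) \<union> (if j = j' then {R j} else {})"
begin

lemma L_in_arc: "i < 3 \<Longrightarrow> j < 3 \<Longrightarrow> L i \<in> path_image (g i j)"
  using start pathstart_in_path_image by metis

lemma R_in_arc: "i < 3 \<Longrightarrow> j < 3 \<Longrightarrow> R j \<in> path_image (g i j)"
  using finish pathfinish_in_path_image by metis

definition via :: "nat \<Rightarrow> real \<Rightarrow> complex" where
  "via j = g 0 j +++ reversepath (g 1 j)"

lemma
  assumes "j < 3"
  shows arc_via: "arc (via j)"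
    and pathstart_via: "pathstart (via j) = L 0"
    and pathfinish_via: "pathfinish (via j) = L 1"
    and path_image_via: "path_image (via j) = path_image (g 0 j) \<union> path_image (g 1 j)"
proof -
  have "path_image (g 0 j) \<inter> path_image (reversepath (g 1 j)) \<subseteq> {R j}"
    using arcs_meet[of 0 j 1 j] assms by simp
  then show "arc (via j)"
    unfolding via_def using assms
    by (intro arc_join) (auto simp: arc_reversepath arc start finish)
  show "pathstart (via j) = L 0" "pathfinish (via j) = L 1"
    unfolding via_def using assms by (auto simp: start)
  show "path_image (via j) = path_image (g 0 j) \<union> path_image (g 1 j)"
    unfolding via_def using assms by (subst path_image_join) (auto simp: start finish)
qed

lemma via_meet:
  assumes "j < 3" "j' < 3" "j \<noteq> j'"
  shows "path_image (via j) \<inter> path_image (via j') = {L 0, L 1}"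
proof
  show "path_image (via j) \<inter> path_image (via j') \<subseteq> {L 0, L 1}"
    using arcs_meet[of 0 j 0 j'] arcs_meet[of 1 j 1 j'] arcs_meet[of 0 j 1 j']
      arcs_meet[of 1 j 0 j'] assms
    by (auto simp: path_image_via)
  show "{L 0, L 1} \<subseteq> path_image (via j) \<inter> path_image (via j')"
    using L_in_arc assms by (auto simp: path_image_via)
qed

lemma arc_meets_via:
  assumes "i < 3" "j < 3" "j' < 3" "j \<noteq> j'"
  shows "path_image (g i j) \<inter> path_image (via j') \<subseteq> (if i < 2 then {L i} else {})"
proof -
  have "i = 0 \<or> i = 1 \<or> i = 2"
    using assms by auto
  then show ?thesis
    using arcs_meet[of i j 0 j'] arcs_meet[of i j 1 j'] assms by (auto simp: path_image_via)
qed

lemma arc_meets_own_via: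
  assumes "j < 3"
  shows "path_image (g 2 j) \<inter> path_image (via j) \<subseteq> {R j}"
  using arcs_meet[of 2 j 0 j] arcs_meet[of 2 j 1 j] assms by (auto simp: path_image_via)

text \<open>The two arcs \<open>via 0\<close> and \<open>via 1\<close> form the Jordan curve \<open>L 0 R 0 L 1 R 1\<close>. If
  \<open>R 2\<close> lay inside it, \<open>via 2\<close> would split its inside into two regions, each bounded away
  from one of \<open>R 0\<close> and \<open>R 1\<close>; but \<open>L 2\<close> lies in one of them and is joined to both.\<close>

lemma R2_not_inside: "R 2 \<notin> inside (path_image (via 0) \<union> path_image (via 1))"
proof
  let ?J = "\<lambda>j. path_image (via j)"
  assume R2: "R 2 \<in> inside (?J 0 \<union> ?J 1)"
  have L01: "L 0 \<noteq> L 1"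
    using L_on_arc[of 0 0 1] L_in_arc[of 0 0] by auto
  have meet: "?J 2 \<inter> inside (?J 0 \<union> ?J 1) \<noteq> {}"
    using R2 R_in_arc[of 0 2] by (auto simp: path_image_via)
  obtain split: "inside (?J 0 \<union> ?J 2) \<union> inside (?J 1 \<union> ?J 2) \<union> (?J 2 - {L 0, L 1})
      = inside (?J 0 \<union> ?J 1)"
    by (rule split_inside_simple_closed_curve[of "via 0" "L 0" "L 1" "via 1" "via 2"])
      (use L01 meet in \<open>simp_all add: arc_imp_simple_path arc_via pathstart_via pathfinish_via
        via_meet\<close>)
  have "path_image (g 2 2) \<inter> (?J 0 \<union> ?J 1) = {}"
    using arc_meets_via[of 2 2 0] arc_meets_via[of 2 2 1] by auto
  then have "path_image (g 2 2) \<subseteq> inside (?J 0 \<union> ?J 1)"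
    using connected_subset_inside[OF connected_arc_image[OF arc] _ R_in_arc R2] by auto
  then have "L 2 \<in> inside (?J 0 \<union> ?J 1)"
    using L_in_arc[of 2 2] by auto
  moreover have "L 2 \<notin> ?J 2"
    using L_on_arc[of 0 2 2] L_on_arc[of 1 2 2] by (auto simp: path_image_via)
  ultimately have "L 2 \<in> inside (?J 0 \<union> ?J 2) \<or> L 2 \<in> inside (?J 1 \<union> ?J 2)"
    unfolding split[symmetric] by blast
  then obtain a where a: "a < 2" "L 2 \<in> inside (?J a \<union> ?J 2)"
    by (elim disjE) (rule that; simp)+
  have sub: "inside (?J a \<union> ?J 2) \<subseteq> inside (?J 0 \<union> ?J 1)"
    using a(1) unfolding split[symmetric] by (auto simp: less_2_cases_iff)
  define b where "b = 1 - a"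
  have b: "b < 2" "b \<noteq> a"
    unfolding b_def using a by arith+
  have "path_image (g 2 b) \<inter> (?J a \<union> ?J 2) = {}"
    using arc_meets_via[of 2 b a] arc_meets_via[of 2 b 2] a b by auto
  then have "path_image (g 2 b) \<subseteq> inside (?J a \<union> ?J 2)"
    using connected_subset_inside[OF connected_arc_image[OF arc] _ L_in_arc a(2)] b by auto
  then have "R b \<in> inside (?J 0 \<union> ?J 1)"
    using R_in_arc[of 2 b] sub b by auto
  moreover have "R b \<in> ?J 0 \<union> ?J 1"
    using R_in_arc[of 0 b] b by (auto simp: path_image_via less_2_cases_iff)
  ultimately show False
    using inside_no_overlap by blast
qed

definition square :: "real \<Rightarrow> complex" where
  "square = via 0 +++ reversepath (via 1)"

lemma
  shows simple_path_square: "simple_path square"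
    and loop_square: "pathfinish square = pathstart square"
    and path_image_square: "path_image square = path_image (via 0) \<union> path_image (via 1)"
proof -
  show "simple_path square"
    unfolding square_def
    by (subst simple_path_join_loop_eq)
      (auto simp: arc_reversepath arc_via pathstart_via pathfinish_via via_meet)
  show "pathfinish square = pathstart square" "path_image square = path_image (via 0) \<union> path_image (via 1)"
    unfolding square_def by (simp_all add: pathstart_via pathfinish_via path_image_join)
qed

text \<open>An arc off \<open>square\<close> meets it in at most one end, and its other end, \<open>R 2\<close> or
  \<open>L 2\<close>, lies outside.\<close>

lemma arc_disjoint_inside_square:
  assumes R2: "R 2 \<in> outside (path_image square)" and ij: "i < 3" "j < 3"
  shows "path_image (g i j) \<inter> inside (path_image square) = {}"
proof -
  let ?J = "path_image square"
  have avoid: "path_image h \<inter> inside ?J = {}"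
    if "arc h" "path_image h \<inter> ?J \<subseteq> {pathstart h}" "pathfinish h \<in> outside ?J" for h
    using arc_image_disjoint_inside[OF that] .
  have g22: "path_image (g 2 2) \<inter> inside ?J = {}"
    using arc_meets_via[of 2 2 0] arc_meets_via[of 2 2 1] R2
    by (intro avoid) (auto simp: arc finish path_image_square)
  have "L 2 \<notin> ?J"
    using L_on_arc[of 0 0 2] L_on_arc[of 1 0 2] L_on_arc[of 0 1 2] L_on_arc[of 1 1 2]
    by (auto simp: path_image_square path_image_via)
  moreover have "L 2 \<notin> inside ?J"
    using g22 L_in_arc[of 2 2] by auto
  ultimately have L2: "L 2 \<in> outside ?J"
    by (simp add: outside_inside)
  have "i < 2 \<or> i = 2" "j < 2 \<or> j = 2"
    using ij by auto
  then consider "i < 2" "j < 2" | "i = 2" "j = 2" | "i < 2" "j = 2" | "i = 2" "j < 2"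
    by blast
  then show ?thesis
  proof cases
    case 1
    then have "path_image (g i j) \<subseteq> ?J"
      by (auto simp: path_image_square path_image_via less_2_cases_iff)
    then show ?thesis
      using inside_no_overlap[of ?J] by blast
  next
    case 2
    then show ?thesis
      using g22 by simp
  next
    case 3
    then show ?thesis
      using arc_meets_via[of i 2 0] arc_meets_via[of i 2 1] R2
      by (intro avoid) (auto simp: arc start finish path_image_square)
  next
    case 4
    have "path_image (g 2 j) \<inter> ?J \<subseteq> {R j}"
      using arc_meets_own_via[of j] arc_meets_via[of 2 j "1 - j"] 4
      by (auto simp: path_image_square less_2_cases_iff)
    then have "path_image (reversepath (g 2 j)) \<inter> inside ?J = {}"
      using L2 4 by (intro avoid) (auto simp: arc arc_reversepath start finish)
    then show ?thesis
      using 4 by simp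
  qed
qed

end

lemma k33_drawing_image:
  assumes "k33_drawing L R g" and f: "inj f"
    and cont: "\<And>i j. i < 3 \<Longrightarrow> j < 3 \<Longrightarrow> continuous_on (path_image (g i j)) f"
  shows "k33_drawing (f \<circ> L) (f \<circ> R) (\<lambda>i j. f \<circ> g i j)"
proof -
  interpret k33_drawing L R g by fact
  show ?thesis
  proof
    fix i j :: nat
    assume ij: "i < 3" "j < 3"
    have "path (f \<circ> g i j)"
      using arc[OF ij] cont[OF ij] by (simp add: path_continuous_image arc_imp_path)
    moreover have "inj_on (f \<circ> g i j) {0..1}"
      using arc_imp_inj_on[OF arc[OF ij]] inj_on_subset[OF f subset_UNIV] by (rule comp_inj_on)
    ultimately show "arc (f \<circ> g i j)"
      unfolding arc_def ..
    show "pathstart (f \<circ> g i j) = (f \<circ> L) i" "pathfinish (f \<circ> g i j) = (f \<circ> R) j"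
      using start[OF ij] finish[OF ij] by (simp_all add: pathstart_def pathfinish_def)
  next
    fix i j k :: nat
    assume "i < 3" "j < 3" "k < 3"
    then show "(f \<circ> L) k \<in> path_image (f \<circ> g i j) \<Longrightarrow> k = i"
      and "(f \<circ> R) k \<in> path_image (f \<circ> g i j) \<Longrightarrow> k = j"
      using L_on_arc R_on_arc f by (auto simp: path_image_compose inj_image_mem_iff)
  next
    fix i j i' j' :: nat
    assume ij: "i < 3" "j < 3" "i' < 3" "j' < 3" "i \<noteq> i' \<or> j \<noteq> j'"
    have "path_image (f \<circ> g i j) \<inter> path_image (f \<circ> g i' j')
        = f ` (path_image (g i j) \<inter> path_image (g i' j'))"
      by (simp add: path_image_compose image_Int[OF f])
    also have "\<dots> \<subseteq> f ` ((if i = i' then {L i} else {}) \<union> (if j = j' then {R j} else {}))"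
      by (rule image_mono[OF arcs_meet[OF ij]])
    finally show "path_image (f \<circ> g i j) \<inter> path_image (f \<circ> g i' j')
        \<subseteq> (if i = i' then {(f \<circ> L) i} else {}) \<union> (if j = j' then {(f \<circ> R) j} else {})"
      by auto
  qed
qed

text \<open>An inversion in a point inside \<open>square\<close> keeps the drawing a drawing and brings \<open>R 2\<close>
  inside.\<close>

lemma (in k33_drawing) R2_not_outside: "R 2 \<notin> outside (path_image square)"
proof
  assume R2: "R 2 \<in> outside (path_image square)"
  obtain z0 where z0: "z0 \<in> inside (path_image square)"
    using Jordan_inside_outside[OF simple_path_square loop_square] by blast
  have "z0 \<notin> path_image (g i j)" if "i < 3" "j < 3" for i j
    using arc_disjoint_inside_square[OF R2 that] z0 by blast
  then have "k33_drawing ((\<lambda>z. 1 / (z - z0)) \<circ> L) ((\<lambda>z. 1 / (z - z0)) \<circ> R)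
      (\<lambda>i j. (\<lambda>z. 1 / (z - z0)) \<circ> g i j)"
    by (intro k33_drawing_image[OF k33_drawing_axioms inj_inversion] continuous_on_inversion)
  then interpret inv: k33_drawing "(\<lambda>z. 1 / (z - z0)) \<circ> L" "(\<lambda>z. 1 / (z - z0)) \<circ> R"
    "\<lambda>i j. (\<lambda>z. 1 / (z - z0)) \<circ> g i j" .
  have "(\<lambda>z. 1 / (z - z0)) (R 2) \<in> inside ((\<lambda>z. 1 / (z - z0)) ` path_image square)"
    by (rule inversion_outside_to_inside[OF simple_path_square loop_square z0 R2])
  moreover have "(\<lambda>z. 1 / (z - z0)) ` path_image square
      = path_image (inv.via 0) \<union> path_image (inv.via 1)"
    by (simp add: path_image_square inv.path_image_via path_image_via path_image_compose image_Un)
  ultimately show False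
    using inv.R2_not_inside by simp
qed

lemma no_k33_drawing: "\<not> k33_drawing L R g"
proof
  assume "k33_drawing L R g"
  then interpret k33_drawing L R g .
  have "R 2 \<notin> path_image square"
    using R_on_arc[of 0 0 2] R_on_arc[of 1 0 2] R_on_arc[of 0 1 2] R_on_arc[of 1 1 2]
    by (auto simp: path_image_square path_image_via)
  then show False
    using R2_not_inside R2_not_outside unfolding path_image_square[symmetric]
    by (simp add: outside_inside)
qed

lemma planar_graph_oriented_arcs:
  assumes "planar_graph V E"
  obtains p :: "'a \<Rightarrow> complex" and \<gamma> :: "'a \<Rightarrow> 'a \<Rightarrow> real \<Rightarrow> complex"
  where "inj_on p V"
    and "\<And>a b. {a, b} \<in> E \<Longrightarrow> arc (\<gamma> a b) \<and> pathstart (\<gamma> a b) = p a \<and> pathfinish (\<gamma> a b) = p b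
           \<and> path_image (\<gamma> a b) \<inter> p ` V = {p a, p b}"
    and "\<And>a b c d. {a, b} \<in> E \<Longrightarrow> {c, d} \<in> E \<Longrightarrow> {a, b} \<noteq> {c, d} \<Longrightarrow>
           path_image (\<gamma> a b) \<inter> path_image (\<gamma> c d) \<subseteq> p ` ({a, b} \<inter> {c, d})"
proof -
  obtain p :: "'a \<Rightarrow> complex" and \<Gamma> :: "'a set \<Rightarrow> real \<Rightarrow> complex" where
    p: "inj_on p V" and
    arcs: "\<forall>e\<in>E. arc (\<Gamma> e) \<and> {pathstart (\<Gamma> e), pathfinish (\<Gamma> e)} = p ` e
              \<and> path_image (\<Gamma> e) \<inter> p ` V = p ` e" and
    cross: "\<forall>e\<in>E. \<forall>e'\<in>E. e \<noteq> e' \<longrightarrow>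
              path_image (\<Gamma> e) \<inter> path_image (\<Gamma> e') \<subseteq> p ` (e \<inter> e')"
    using assms unfolding planar_graph_def by (elim exE conjE) (rule that)
  define \<gamma> where "\<gamma> a b =
    (if pathstart (\<Gamma> {a, b}) = p a then \<Gamma> {a, b} else reversepath (\<Gamma> {a, b}))" for a b
  have image: "path_image (\<gamma> a b) = path_image (\<Gamma> {a, b})" for a b
    unfolding \<gamma>_def by simp
  show ?thesis
  proof (rule that[OF p])
    fix a b
    assume ab: "{a, b} \<in> E"
    have ends: "{pathstart (\<Gamma> {a, b}), pathfinish (\<Gamma> {a, b})} = {p a, p b}"
      and arc: "arc (\<Gamma> {a, b})"
      using arcs[rule_format, OF ab] by auto
    have "pathfinish (\<Gamma> {a, b}) \<noteq> pathstart (\<Gamma> {a, b})"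
      using arc by (rule arc_distinct_ends)
    then have "pathstart (\<Gamma> {a, b}) = p a \<and> pathfinish (\<Gamma> {a, b}) = p b
        \<or> pathstart (\<Gamma> {a, b}) = p b \<and> pathfinish (\<Gamma> {a, b}) = p a"
      using ends by (metis doubleton_eq_iff)
    then have "pathstart (\<gamma> a b) = p a \<and> pathfinish (\<gamma> a b) = p b"
      unfolding \<gamma>_def by auto
    moreover have "arc (\<gamma> a b)"
      unfolding \<gamma>_def using arc by (simp add: arc_reversepath)
    ultimately show "arc (\<gamma> a b) \<and> pathstart (\<gamma> a b) = p a \<and> pathfinish (\<gamma> a b) = p b
        \<and> path_image (\<gamma> a b) \<inter> p ` V = {p a, p b}"
      using arcs[rule_format, OF ab] by (simp add: image)
  next
    fix a b c d
    assume "{a, b} \<in> E" "{c, d} \<in> E" "{a, b} \<noteq> {c, d}"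
    then show "path_image (\<gamma> a b) \<inter> path_image (\<gamma> c d) \<subseteq> p ` ({a, b} \<inter> {c, d})"
      unfolding image by (rule cross[rule_format])
  qed
qed

lemma planar_graph_no_K33:
  fixes l r :: "nat \<Rightarrow> 'a"
  assumes "planar_graph V E"
    and lV: "\<And>i. i < 3 \<Longrightarrow> l i \<in> V" and rV: "\<And>j. j < 3 \<Longrightarrow> r j \<in> V"
    and l_inj: "\<And>i i'. i < 3 \<Longrightarrow> i' < 3 \<Longrightarrow> l i = l i' \<Longrightarrow> i = i'"
    and r_inj: "\<And>j j'. j < 3 \<Longrightarrow> j' < 3 \<Longrightarrow> r j = r j' \<Longrightarrow> j = j'"
    and lr: "\<And>i j. i < 3 \<Longrightarrow> j < 3 \<Longrightarrow> l i \<noteq> r j"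
    and edges: "\<And>i j. i < 3 \<Longrightarrow> j < 3 \<Longrightarrow> {l i, r j} \<in> E"
  shows False
proof -
  obtain p :: "'a \<Rightarrow> complex" and \<gamma> where
    p: "inj_on p V" and
    arcs: "\<And>a b. {a, b} \<in> E \<Longrightarrow> arc (\<gamma> a b) \<and> pathstart (\<gamma> a b) = p a
             \<and> pathfinish (\<gamma> a b) = p b \<and> path_image (\<gamma> a b) \<inter> p ` V = {p a, p b}" and
    cross: "\<And>a b c d. {a, b} \<in> E \<Longrightarrow> {c, d} \<in> E \<Longrightarrow> {a, b} \<noteq> {c, d} \<Longrightarrow>
             path_image (\<gamma> a b) \<inter> path_image (\<gamma> c d) \<subseteq> p ` ({a, b} \<inter> {c, d})"
    using planar_graph_oriented_arcs[OF assms(1)] by metis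
  have p_eq: "p x = p y \<longleftrightarrow> x = y" if "x \<in> V" "y \<in> V" for x y
    using p that by (auto dest: inj_onD)
  have "k33_drawing (p \<circ> l) (p \<circ> r) (\<lambda>i j. \<gamma> (l i) (r j))"
  proof
    fix i j :: nat
    assume ij: "i < 3" "j < 3"
    then show "arc (\<gamma> (l i) (r j))" "pathstart (\<gamma> (l i) (r j)) = (p \<circ> l) i"
      "pathfinish (\<gamma> (l i) (r j)) = (p \<circ> r) j"
      using arcs[OF edges[OF ij]] by auto
  next
    fix i j k :: nat
    assume ijk: "i < 3" "j < 3" "k < 3"
    have on_arc: "x = l i \<or> x = r j" if "p x \<in> path_image (\<gamma> (l i) (r j))" "x \<in> V" for x
    proof -
      have "p x \<in> {p (l i), p (r j)}"
        using arcs[OF edges[OF ijk(1,2)]] that by blast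
      then show ?thesis
        using p_eq lV rV ijk that by auto
    qed
    show "(p \<circ> l) k \<in> path_image (\<gamma> (l i) (r j)) \<Longrightarrow> k = i"
      using on_arc[of "l k"] lV l_inj lr ijk by force
    show "(p \<circ> r) k \<in> path_image (\<gamma> (l i) (r j)) \<Longrightarrow> k = j"
      using on_arc[of "r k"] rV r_inj lr ijk by force
  next
    fix i j i' j' :: nat
    assume ij: "i < 3" "j < 3" "i' < 3" "j' < 3" "i \<noteq> i' \<or> j \<noteq> j'"
    have "{l i, r j} \<noteq> {l i', r j'}"
      using ij l_inj r_inj lr by (metis doubleton_eq_iff)
    then have "path_image (\<gamma> (l i) (r j)) \<inter> path_image (\<gamma> (l i') (r j'))
        \<subseteq> p ` ({l i, r j} \<inter> {l i', r j'})"
      using cross[OF edges[OF ij(1,2)] edges[OF ij(3,4)]] by blast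
    also have "\<dots> \<subseteq> p ` ((if i = i' then {l i} else {}) \<union> (if j = j' then {r j} else {}))"
      using ij l_inj r_inj lr by (intro image_mono) auto
    finally show "path_image (\<gamma> (l i) (r j)) \<inter> path_image (\<gamma> (l i') (r j'))
        \<subseteq> (if i = i' then {(p \<circ> l) i} else {}) \<union> (if j = j' then {(p \<circ> r) j} else {})"
      by auto
  qed
  then show False
    using no_k33_drawing by blast
qed

section \<open>Tumors\<close>

definition tumor_of :: "'a set set \<Rightarrow> 'a set \<Rightarrow> 'a set \<Rightarrow> 'a set \<Rightarrow> 'a set" where
  "tumor_of E B S e = {s \<in> S. nbrs E s \<inter> B = e}"

definition tumor_adjacent_pairs :: "'a set set \<Rightarrow> 'a set \<Rightarrow> 'a set \<Rightarrow> 'a set \<Rightarrow> ('a \<times> 'a) set" where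
  "tumor_adjacent_pairs E B S e =
     {(a, b). a \<in> tumor_of E B S e \<and> b \<in> tumor_of E B S e \<and> {a, b} \<in> E}"

lemma tumor_eq_tumor_of: "tumor E B S x y = tumor_of E B S {x, y}"
  unfolding tumor_def tumor_of_def ..

lemma mem_nbrs_iff [simp]: "u \<in> nbrs E v \<longleftrightarrow> {u, v} \<in> E"
  unfolding nbrs_def by simp

lemma finite_tumor_of: "finite S \<Longrightarrow> finite (tumor_of E B S e)"
  unfolding tumor_of_def by simp

lemma finite_tumor_adjacent_pairs: "finite S \<Longrightarrow> finite (tumor_adjacent_pairs E B S e)"
  by (rule finite_subset[of _ "tumor_of E B S e \<times> tumor_of E B S e"])
    (auto simp: tumor_adjacent_pairs_def finite_tumor_of)

lemma swap_mem_tumor_adjacent_pairs: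
  "(a, b) \<in> tumor_adjacent_pairs E B S e \<Longrightarrow> (b, a) \<in> tumor_adjacent_pairs E B S e"
  unfolding tumor_adjacent_pairs_def by (simp add: insert_commute)

lemma tumor_graphD:
  assumes "tumor_graph V E B S"
  shows "finite V" "B \<subseteq> V" "S \<subseteq> V" "V = B \<union> S"
    and "\<And>s. s \<in> S \<Longrightarrow> card (nbrs E s \<inter> B) \<le> 2"
    and "\<And>e. e \<in> E \<Longrightarrow> card e = 2"
  using assms unfolding tumor_graph_def simple_graph_def by auto

lemma tumor_graph_finite:
  assumes "tumor_graph V E B S"
  shows "finite B" "finite S"
  using tumor_graphD(1-3)[OF assms] finite_subset by blast+

lemma tumor_graph_edge_neq: "tumor_graph V E B S \<Longrightarrow> {a, b} \<in> E \<Longrightarrow> a \<noteq> b"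
  using tumor_graphD(6) by fastforce

lemma mem_tumor_of:
  assumes tg: "tumor_graph V E B S" and s: "s \<in> S"
    and "{x, s} \<in> E" "{y, s} \<in> E" "x \<noteq> y" "x \<in> B" "y \<in> B"
  shows "s \<in> tumor_of E B S {x, y}"
proof -
  have fin: "finite (nbrs E s \<inter> B)"
    using tumor_graph_finite(1)[OF tg] by blast
  have "{x, y} \<subseteq> nbrs E s \<inter> B"
    using assms by simp
  moreover have "card (nbrs E s \<inter> B) \<le> card {x, y}"
    using tumor_graphD(5)[OF tg s] \<open>x \<noteq> y\<close> by simp
  ultimately have "nbrs E s \<inter> B = {x, y}"
    using card_seteq[OF fin] by blast
  then show ?thesis
    using s unfolding tumor_of_def by simp
qed

lemma nbrs_of_mem_tumor_of: "s \<in> tumor_of E B S e \<Longrightarrow> nbrs E s \<inter> B = e"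
  unfolding tumor_of_def by simp

lemma benign_edge_in_tumor:
  assumes tg: "tumor_graph V E B S" and bn: "benign V E B S"
    and a: "a \<in> S" and b: "b \<in> S" and ab: "{a, b} \<in> E"
    and xa: "{x, a} \<in> E" and yb: "{y, b} \<in> E" and xy: "x \<noteq> y" "x \<in> B" "y \<in> B"
  shows "a \<in> tumor_of E B S {x, y}" "b \<in> tumor_of E B S {x, y}"
proof -
  have "\<exists>x'\<in>B. \<exists>y'\<in>B. x' \<noteq> y' \<and> a \<in> tumor E B S x' y' \<and> b \<in> tumor E B S x' y'"
    using bn a b ab unfolding benign_def by simp
  then obtain x' y' where x'y': "a \<in> tumor_of E B S {x', y'}" "b \<in> tumor_of E B S {x', y'}"
    unfolding tumor_eq_tumor_of by blast
  have "x \<in> nbrs E a \<inter> B" "y \<in> nbrs E b \<inter> B"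
    using xa yb xy by simp_all
  then have "x \<in> {x', y'}" "y \<in> {x', y'}"
    unfolding nbrs_of_mem_tumor_of[OF x'y'(1)] nbrs_of_mem_tumor_of[OF x'y'(2)] .
  then have "{x', y'} = {x, y}"
    using xy by auto
  then show "a \<in> tumor_of E B S {x, y}" "b \<in> tumor_of E B S {x, y}"
    using x'y' by simp_all
qed

text \<open>Three tumor neighbours of a tumor vertex \<open>a\<close>, together with \<open>a\<close> and the two vertices of
  B under the tumor, would span a \<open>K\<^sub>3\<^sub>,\<^sub>3\<close>.\<close>

lemma card_tumor_neighbours_le:
  assumes tg: "tumor_graph V E B S" and pl: "planar_graph V E"
    and e: "e \<subseteq> B" "card e = 2" and a: "a \<in> tumor_of E B S e"
  shows "card {b \<in> tumor_of E B S e. {a, b} \<in> E} \<le> 2"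
proof (rule ccontr)
  assume "\<not> ?thesis"
  then obtain A where A: "A \<subseteq> {b \<in> tumor_of E B S e. {a, b} \<in> E}" "card A = 3"
    using obtain_subset_with_card_n[of 3 "{b \<in> tumor_of E B S e. {a, b} \<in> E}"] by force
  then obtain b0 b1 b2 where bs: "A = {b0, b1, b2}" "b0 \<noteq> b1" "b1 \<noteq> b2" "b0 \<noteq> b2"
    unfolding card_3_iff by blast
  obtain x y where xy: "e = {x, y}" "x \<noteq> y"
    using e(2) unfolding card_2_iff by blast
  define l where "l i = (if i = 0 then x else if i = 1 then y else a)" for i :: nat
  define r where "r i = (if i = 0 then b0 else if i = 1 then b1 else b2)" for i :: nat
  have bt: "b0 \<in> tumor_of E B S e" "b1 \<in> tumor_of E B S e" "b2 \<in> tumor_of E B S e"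
    and ab: "{a, b0} \<in> E" "{a, b1} \<in> E" "{a, b2} \<in> E"
    using A bs by auto
  have tumor_S: "tumor_of E B S e \<subseteq> S"
    unfolding tumor_of_def by blast
  have xyB: "x \<in> B" "y \<in> B"
    using e xy by auto
  have disj: "B \<inter> S = {}"
    using tg unfolding tumor_graph_def by blast
  have base: "{x, b} \<in> E" "{y, b} \<in> E" if "b \<in> tumor_of E B S e" for b
    using that xy unfolding tumor_of_def by (auto simp: insert_commute)
  have "a \<noteq> b0" "a \<noteq> b1" "a \<noteq> b2"
    using ab tumor_graph_edge_neq[OF tg] by blast+
  show False
  proof (rule planar_graph_no_K33[OF pl, of l r])
    show "l i \<in> V" "r i \<in> V" if "i < 3" for i
      using xyB a bt tumor_S tumor_graphD(2,3)[OF tg] unfolding l_def r_def by auto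
    show "i = i'" if "i < 3" "i' < 3" "l i = l i'" for i i'
      using that xy xyB a tumor_S disj unfolding l_def by (auto split: if_splits)
    show "j = j'" if "j < 3" "j' < 3" "r j = r j'" for j j'
      using that bs unfolding r_def by (auto split: if_splits)
    show "l i \<noteq> r j" if "i < 3" "j < 3" for i j
      using that xyB bt tumor_S disj \<open>a \<noteq> b0\<close> \<open>a \<noteq> b1\<close> \<open>a \<noteq> b2\<close>
      unfolding l_def r_def by (auto split: if_splits)
    show "{l i, r j} \<in> E" if "i < 3" "j < 3" for i j
      using that base[OF bt(1)] base[OF bt(2)] base[OF bt(3)] ab
      unfolding l_def r_def by (auto split: if_splits)
  qed
qed

lemma card_tumor_adjacent_pairs_le:
  assumes tg: "tumor_graph V E B S" and pl: "planar_graph V E" and e: "e \<subseteq> B" "card e = 2"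
  shows "card (tumor_adjacent_pairs E B S e) \<le> 2 * card (tumor_of E B S e)"
proof -
  have fin: "finite (tumor_of E B S e)"
    using finite_tumor_of tumor_graph_finite(2)[OF tg] by blast
  have "tumor_adjacent_pairs E B S e
      = (SIGMA a:tumor_of E B S e. {b \<in> tumor_of E B S e. {a, b} \<in> E})"
    unfolding tumor_adjacent_pairs_def by auto
  then have "card (tumor_adjacent_pairs E B S e)
      = (\<Sum>a\<in>tumor_of E B S e. card {b \<in> tumor_of E B S e. {a, b} \<in> E})"
    using fin by (simp add: card_SigmaI)
  also have "\<dots> \<le> (\<Sum>a\<in>tumor_of E B S e. 2)"
    by (rule sum_mono) (rule card_tumor_neighbours_le[OF tg pl e])
  finally show ?thesis
    by simp
qed

section \<open>Encoding good cycles\<close>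

definition good_labelling :: "'a set \<Rightarrow> 'a set set \<Rightarrow> 'a set \<Rightarrow> 'a set \<Rightarrow> nat \<Rightarrow> (nat \<Rightarrow> 'a) \<Rightarrow> bool"
  where "good_labelling V E B S m v \<longleftrightarrow> inj_on v {0..<2*m+1} \<and> v ` {0..<2*m+1} \<subseteq> V
      \<and> (\<forall>i<2*m. even i \<longrightarrow> v i \<in> B) \<and> (\<forall>i<2*m. odd i \<longrightarrow> v i \<in> S) \<and> cycle_edges (2*m+1) v \<subseteq> E"

lemma good_cycles_eq: "good_cycles V E B S m = {cycle_edges (2*m+1) v | v. good_labelling V E B S m v}"
  unfolding good_cycles_def good_labelling_def by blast

lemma path_edges_Suc_eq_image: "path_edges (Suc m) w = (\<lambda>i. {w i, w (Suc i)}) ` {..<m}"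
  unfolding path_edges_def by auto

lemma path_edges_Suc_Suc: "path_edges (Suc (Suc k)) w = insert {w k, w (Suc k)} (path_edges (Suc k) w)"
  unfolding path_edges_Suc_eq_image lessThan_Suc by simp

lemma cycle_edges_Suc: "cycle_edges (Suc k) v = insert {v k, v 0} (path_edges (Suc k) v)"
proof -
  have "cycle_edges (Suc k) v = (\<lambda>i. {v i, v ((i + 1) mod Suc k)}) ` {..<Suc k}"
    unfolding cycle_edges_def by auto
  also have "\<dots> = insert {v k, v 0} ((\<lambda>i. {v i, v (Suc i)}) ` {..<k})"
    unfolding lessThan_Suc image_insert by (intro arg_cong2[where f = insert] image_cong) auto
  finally show ?thesis
    unfolding path_edges_Suc_eq_image .
qed

lemma path_edge_inj:
  assumes inj: "inj_on w {0..<Suc m}" and "i < m" "j < m" "{w i, w (Suc i)} = {w j, w (Suc j)}"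
  shows "i = j"
proof -
  have "w i = w j \<and> w (Suc i) = w (Suc j) \<or> w i = w (Suc j) \<and> w (Suc i) = w j"
    using assms(4) by (metis doubleton_eq_iff)
  then show ?thesis
  proof
    assume "w i = w j \<and> w (Suc i) = w (Suc j)"
    then show ?thesis
      using inj assms(2,3) by (auto dest: inj_onD)
  next
    assume "w i = w (Suc j) \<and> w (Suc i) = w j"
    then have "i = Suc j" "Suc i = j"
      using inj assms(2,3) by (auto dest: inj_onD)
    then show ?thesis
      by simp
  qed
qed

lemma good_labellingD:
  assumes "good_labelling V E B S m v"
  shows "\<And>i j. i \<le> 2 * m \<Longrightarrow> j \<le> 2 * m \<Longrightarrow> v i = v j \<longleftrightarrow> i = j"
    and "\<And>i. i \<le> 2 * m \<Longrightarrow> v i \<in> V"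
    and "\<And>i. i < 2 * m \<Longrightarrow> even i \<Longrightarrow> v i \<in> B"
    and "\<And>i. i < 2 * m \<Longrightarrow> odd i \<Longrightarrow> v i \<in> S"
    and "\<And>i. i < 2 * m \<Longrightarrow> {v i, v (Suc i)} \<in> E"
    and "{v (2 * m), v 0} \<in> E"
  using assms cycle_edges_Suc[of "2 * m" v]
  unfolding good_labelling_def path_edges_Suc_eq_image by (auto dest: inj_onD)

definition subdivision :: "'a set set \<Rightarrow> ('a set \<Rightarrow> 'a) \<Rightarrow> 'a set set" where
  "subdivision P \<sigma> = (\<Union>f\<in>P. (\<lambda>z. {z, \<sigma> f}) ` f)"

lemma subdivision_path_edges:
  assumes "\<And>i. i < k \<Longrightarrow> \<sigma> {v (2 * i), v (2 * i + 2)} = v (2 * i + 1)"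
  shows "subdivision (path_edges (Suc k) (\<lambda>i. v (2 * i))) \<sigma> = path_edges (Suc (2 * k)) v"
proof -
  have "subdivision (path_edges (Suc k) (\<lambda>i. v (2 * i))) \<sigma>
      = (\<Union>i<k. {{v (2 * i), v (2 * i + 1)}, {v (2 * i + 2), v (2 * i + 1)}})"
    unfolding subdivision_def path_edges_Suc_eq_image using assms by (simp add: algebra_simps)
  also have "\<dots> = path_edges (Suc (2 * k)) v"
  proof (intro equalityI subsetI)
    fix x
    assume "x \<in> (\<Union>i<k. {{v (2 * i), v (2 * i + 1)}, {v (2 * i + 2), v (2 * i + 1)}})"
    then obtain i where "i < k" "x = {v (2 * i), v (Suc (2 * i))} \<or> x = {v (Suc (2 * i)), v (Suc (Suc (2 * i)))}"
      by (auto simp: insert_commute)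
    then show "x \<in> path_edges (Suc (2 * k)) v"
      unfolding path_edges_Suc_eq_image by force
  next
    fix x
    assume "x \<in> path_edges (Suc (2 * k)) v"
    then obtain j where j: "j < 2 * k" "x = {v j, v (Suc j)}"
      unfolding path_edges_Suc_eq_image by blast
    obtain i where "j = 2 * i \<or> j = 2 * i + 1"
      by (metis evenE oddE)
    then show "x \<in> (\<Union>i<k. {{v (2 * i), v (2 * i + 1)}, {v (2 * i + 2), v (2 * i + 1)}})"
      using j by (auto simp: insert_commute)
  qed
  finally show ?thesis .
qed

text \<open>Contracting each S-vertex \<open>v (2i+1)\<close> of a good labelling onto the B-edge
  \<open>{v (2i), v (2i+2)}\<close> it lies over turns the alternating part into a path in B whose edges
  carry a choice of tumor vertices.\<close>

lemma good_labelling_subdivides_path: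
  assumes tg: "tumor_graph V E B S" and v: "good_labelling V E B S m v"
    and k: "k \<le> m" and last: "v (2 * k) \<in> B"
  obtains \<sigma> where "\<sigma> \<in> (\<Pi>\<^sub>E f\<in>path_edges (Suc k) (\<lambda>i. v (2 * i)). tumor_of E B S f)"
    and "subdivision (path_edges (Suc k) (\<lambda>i. v (2 * i))) \<sigma> = path_edges (Suc (2 * k)) v"
proof -
  define w where "w = (\<lambda>i. v (2 * i))"
  have w_inj: "inj_on w {0..<Suc k}"
    by (rule inj_onI) (use good_labellingD(1)[OF v] k in \<open>auto simp: w_def\<close>)
  have wB: "w i \<in> B" if "i \<le> k" for i
    using that last good_labellingD(3)[OF v, of "2 * i"] k unfolding w_def
    by (cases "i = k") auto
  define idx where "idx f = (THE i. i < k \<and> f = {w i, w (Suc i)})" for f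
  have idx: "idx {w i, w (Suc i)} = i" if "i < k" for i
    unfolding idx_def by (rule the_equality) (use that path_edge_inj[OF w_inj] in auto)
  define \<sigma> where "\<sigma> = restrict (\<lambda>f. v (2 * idx f + 1)) (path_edges (Suc k) w)"
  have \<sigma>_w: "\<sigma> {w i, w (Suc i)} = v (2 * i + 1)" if "i < k" for i
    unfolding \<sigma>_def path_edges_Suc_eq_image using idx[OF that] that by auto
  show thesis
  proof (rule that[folded w_def])
    show "\<sigma> \<in> (\<Pi>\<^sub>E f\<in>path_edges (Suc k) w. tumor_of E B S f)"
    proof
      fix f
      assume "f \<in> path_edges (Suc k) w"
      then obtain i where i: "i < k" "f = {w i, w (Suc i)}"
        unfolding path_edges_Suc_eq_image by blast
      have "v (2 * i + 1) \<in> S"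
        using good_labellingD(4)[OF v, of "2 * i + 1"] i k by simp
      moreover have "{w i, v (2 * i + 1)} \<in> E" "{w (Suc i), v (2 * i + 1)} \<in> E"
        using good_labellingD(5)[OF v, of "2 * i"] good_labellingD(5)[OF v, of "2 * i + 1"] i k
        by (simp_all add: w_def insert_commute)
      moreover have "w i \<noteq> w (Suc i)"
        using i by (simp add: inj_on_eq_iff[OF w_inj])
      ultimately show "\<sigma> f \<in> tumor_of E B S f"
        using mem_tumor_of[OF tg] wB i \<sigma>_w by simp
    qed (simp add: \<sigma>_def)
    show "subdivision (path_edges (Suc k) w) \<sigma> = path_edges (Suc (2 * k)) v"
      unfolding w_def by (rule subdivision_path_edges) (use \<sigma>_w in \<open>simp add: w_def\<close>)
  qed
qed

definition path_ends :: "'a set set \<Rightarrow> 'a set" where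
  "path_ends P = {z. card {f \<in> P. z \<in> f} = 1}"

lemma card_path_edges_containing:
  assumes inj: "inj_on w {0..<Suc m}"
  shows "card {f \<in> path_edges (Suc m) w. z \<in> f} = card {i. i < m \<and> (w i = z \<or> w (Suc i) = z)}"
proof -
  have "{f \<in> path_edges (Suc m) w. z \<in> f} = (\<lambda>i. {w i, w (Suc i)}) ` {i. i < m \<and> (w i = z \<or> w (Suc i) = z)}"
    unfolding path_edges_Suc_eq_image by auto
  moreover have "inj_on (\<lambda>i. {w i, w (Suc i)}) {i. i < m \<and> (w i = z \<or> w (Suc i) = z)}"
    by (rule inj_onI) (use path_edge_inj[OF inj] in auto)
  ultimately show ?thesis
    by (simp add: card_image)
qed

lemma path_ends_path_edges:
  assumes inj: "inj_on w {0..<Suc m}" and m: "m \<ge> 1"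
  shows "path_ends (path_edges (Suc m) w) = {w 0, w m}"
proof -
  define I where "I z = {i. i < m \<and> (w i = z \<or> w (Suc i) = z)}" for z
  have deg: "card {f \<in> path_edges (Suc m) w. z \<in> f} = card (I z)" for z
    unfolding I_def by (rule card_path_edges_containing[OF inj])
  have w_eq: "w i = w j \<longleftrightarrow> i = j" if "i \<le> m" "j \<le> m" for i j
    using inj that by (auto dest: inj_onD)
  have I0: "I (w 0) = {0}" and Im: "I (w m) = {m - 1}"
    unfolding I_def using m w_eq by auto
  have I_inner: "card (I (w j)) \<ge> 2" if "0 < j" "j < m" for j
  proof -
    have "{j - 1, j} \<subseteq> I (w j)"
      unfolding I_def using that by auto
    then show ?thesis
      using card_mono[of "I (w j)" "{j - 1, j}"] that by (simp add: I_def)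
  qed
  show ?thesis
  proof (intro equalityI subsetI)
    fix z
    assume "z \<in> path_ends (path_edges (Suc m) w)"
    then have one: "card (I z) = 1"
      unfolding path_ends_def deg by simp
    then obtain i where "I z = {i}"
      using card_1_singletonE by blast
    then have i: "i < m" "w i = z \<or> w (Suc i) = z"
      unfolding I_def by auto
    show "z \<in> {w 0, w m}"
    proof (cases "w i = z")
      case True
      then show ?thesis
        using I_inner[of i] i one by (cases "i = 0") auto
    next
      case False
      then have "w (Suc i) = z"
        using i by simp
      then show ?thesis
        using I_inner[of "Suc i"] i one by (cases "Suc i = m") auto
    qed
  next
    fix z
    assume "z \<in> {w 0, w m}"
    then show "z \<in> path_ends (path_edges (Suc m) w)"
      unfolding path_ends_def deg using I0 Im by auto
  qed
qed

definition path_codes :: "'a set set \<Rightarrow> 'a set \<Rightarrow> 'a set \<Rightarrow> nat \<Rightarrow> ('a set set \<times> ('a set \<Rightarrow> 'a)) set"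
  where "path_codes E B S m = (SIGMA P:path_copies B (Suc m). \<Pi>\<^sub>E f\<in>P. tumor_of E B S f)"

definition decode_path :: "'a set set \<times> ('a set \<Rightarrow> 'a) \<Rightarrow> 'a set set" where
  "decode_path = (\<lambda>(P, \<sigma>). insert (path_ends P) (subdivision P \<sigma>))"

lemma good_cycle_closing_in_B:
  assumes tg: "tumor_graph V E B S" and v: "good_labelling V E B S m v"
    and m: "m \<ge> 1" and last: "v (2 * m) \<in> B"
  shows "cycle_edges (2 * m + 1) v \<in> decode_path ` path_codes E B S m"
proof -
  obtain \<sigma> where \<sigma>: "\<sigma> \<in> (\<Pi>\<^sub>E f\<in>path_edges (Suc m) (\<lambda>i. v (2 * i)). tumor_of E B S f)"
    and sub: "subdivision (path_edges (Suc m) (\<lambda>i. v (2 * i))) \<sigma> = path_edges (Suc (2 * m)) v"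
    using good_labelling_subdivides_path[OF tg v order.refl last] by blast
  have inj: "inj_on (\<lambda>i. v (2 * i)) {0..<Suc m}"
    by (rule inj_onI) (use good_labellingD(1)[OF v] in auto)
  have "v (2 * i) \<in> B" if "i \<le> m" for i
    using that last good_labellingD(3)[OF v, of "2 * i"] by (cases "i = m") auto
  then have "path_edges (Suc m) (\<lambda>i. v (2 * i)) \<in> path_copies B (Suc m)"
    unfolding path_copies_def using inj by fastforce
  moreover have "decode_path (path_edges (Suc m) (\<lambda>i. v (2 * i)), \<sigma>) = cycle_edges (2 * m + 1) v"
    unfolding decode_path_def using path_ends_path_edges[OF inj m] sub
    by (simp add: cycle_edges_Suc insert_commute)
  ultimately show ?thesis
    unfolding path_codes_def using \<sigma> by (metis SigmaI image_eqI)
qed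

definition orient :: "'a set \<Rightarrow> 'a \<times> 'a" where
  "orient e = (SOME (x, y). x \<noteq> y \<and> e = {x, y})"

lemma orient_doubleton:
  assumes "x \<noteq> y"
  shows "orient {x, y} = (x, y) \<or> orient {x, y} = (y, x)"
proof -
  have "\<exists>p. case p of (x', y') \<Rightarrow> x' \<noteq> y' \<and> {x, y} = {x', y'}"
    using assms by auto
  then have "case orient {x, y} of (x', y') \<Rightarrow> x' \<noteq> y' \<and> {x, y} = {x', y'}"
    unfolding orient_def by (rule someI_ex)
  then show ?thesis
    by (auto simp: doubleton_eq_iff split: prod.splits)
qed

text \<open>The path \<open>x a b y\<close> replacing the edge \<open>e = {x, y}\<close>; \<open>orient\<close> fixes which end of \<open>e\<close>
  is joined to \<open>a\<close>.\<close>

definition detour :: "'a set \<Rightarrow> 'a \<times> 'a \<Rightarrow> 'a set set" where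
  "detour e = (\<lambda>(a, b). case orient e of (x, y) \<Rightarrow> {{x, a}, {a, b}, {b, y}})"

lemma detour_doubleton:
  assumes "x \<noteq> y"
  obtains ab where "ab \<in> {(a, b), (b, a)}" "detour {x, y} ab = {{x, a}, {a, b}, {b, y}}"
proof (cases "orient {x, y} = (x, y)")
  case True
  then show ?thesis
    using that[of "(a, b)"] unfolding detour_def by simp
next
  case False
  then have "orient {x, y} = (y, x)"
    using orient_doubleton[OF assms] by blast
  then show ?thesis
    using that[of "(b, a)"] unfolding detour_def by (simp add: insert_commute)
qed

text \<open>If a good labelling closes in S, benignity puts \<open>v (2m-1)\<close> and \<open>v (2m)\<close> into the tumor
  over \<open>{v (2m-2), v 0}\<close>, which closes the contracted path into a cycle.\<close>

lemma good_labelling_detour: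
  assumes tg: "tumor_graph V E B S" and bn: "benign V E B S" and v: "good_labelling V E B S m v"
    and m: "m \<ge> 2" and last: "v (2 * m) \<in> S"
  obtains \<sigma> ab where "\<sigma> \<in> (\<Pi>\<^sub>E f\<in>path_edges m (\<lambda>i. v (2 * i)). tumor_of E B S f)"
    and "ab \<in> tumor_adjacent_pairs E B S {v (2 * m - 2), v 0}"
    and "cycle_edges (2 * m + 1) v
      = detour {v (2 * m - 2), v 0} ab \<union> subdivision (path_edges m (\<lambda>i. v (2 * i))) \<sigma>"
proof -
  define k where "k = m - 1"
  have k: "m = Suc k" "k \<ge> 1" "2 * m - 2 = 2 * k"
    using m unfolding k_def by auto
  have x: "v (2 * k) \<in> B" and y: "v 0 \<in> B"
    using good_labellingD(3)[OF v] k by auto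
  obtain \<sigma> where \<sigma>: "\<sigma> \<in> (\<Pi>\<^sub>E f\<in>path_edges m (\<lambda>i. v (2 * i)). tumor_of E B S f)"
    and sub: "subdivision (path_edges m (\<lambda>i. v (2 * i))) \<sigma> = path_edges (Suc (2 * k)) v"
    using good_labelling_subdivides_path[OF tg v _ x] k by auto
  define a where "a = v (2 * k + 1)"
  define b where "b = v (2 * m)"
  have a: "a \<in> S"
    unfolding a_def using good_labellingD(4)[OF v] k by simp
  have edges: "{v (2 * k), a} \<in> E" "{a, b} \<in> E" "{v 0, b} \<in> E"
    unfolding a_def b_def using good_labellingD(5,6)[OF v] k by (auto simp: insert_commute)
  have xy: "v (2 * k) \<noteq> v 0"
    using good_labellingD(1)[OF v] k by simp
  have ab: "(a, b) \<in> tumor_adjacent_pairs E B S {v (2 * k), v 0}"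
    using benign_edge_in_tumor[OF tg bn a last[folded b_def] edges(2,1,3) xy x y] edges(2)
    unfolding tumor_adjacent_pairs_def by simp
  have cycle: "cycle_edges (2 * m + 1) v
      = {{v (2 * k), a}, {a, b}, {b, v 0}} \<union> path_edges (Suc (2 * k)) v"
    unfolding a_def b_def k(1) by (simp add: cycle_edges_Suc path_edges_Suc_Suc insert_commute)
  obtain ab' where "ab' \<in> {(a, b), (b, a)}"
    "detour {v (2 * k), v 0} ab' = {{v (2 * k), a}, {a, b}, {b, v 0}}"
    using detour_doubleton[OF xy] by blast
  then show thesis
    using that[of \<sigma> ab'] \<sigma> ab swap_mem_tumor_adjacent_pairs[OF ab] cycle sub k(3) by auto
qed

definition cycle_codes :: "'a set set \<Rightarrow> 'a set \<Rightarrow> 'a set \<Rightarrow> nat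
    \<Rightarrow> ('a set set \<times> 'a set \<times> ('a set \<Rightarrow> 'a) \<times> ('a \<times> 'a)) set" where
  "cycle_codes E B S m = (SIGMA C:cycle_copies B m. SIGMA e:C.
     (\<Pi>\<^sub>E f\<in>C - {e}. tumor_of E B S f) \<times> tumor_adjacent_pairs E B S e)"

definition decode_cycle :: "'a set set \<times> 'a set \<times> ('a set \<Rightarrow> 'a) \<times> ('a \<times> 'a) \<Rightarrow> 'a set set"
  where "decode_cycle = (\<lambda>(C, e, \<sigma>, ab). detour e ab \<union> subdivision (C - {e}) \<sigma>)"

definition edge_codes :: "'a set set \<Rightarrow> 'a set \<Rightarrow> 'a set \<Rightarrow> ('a set \<times> 'a \<times> ('a \<times> 'a)) set" where
  "edge_codes E B S = (SIGMA e:complete_edges B. tumor_of E B S e \<times> tumor_adjacent_pairs E B S e)"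

definition decode_edge :: "'a set \<times> 'a \<times> ('a \<times> 'a) \<Rightarrow> 'a set set" where
  "decode_edge = (\<lambda>(e, s, ab). detour e ab \<union> subdivision {e} (\<lambda>_. s))"

lemma good_cycle_closing_in_S:
  assumes tg: "tumor_graph V E B S" and bn: "benign V E B S" and v: "good_labelling V E B S m v"
    and m: "m \<ge> 3" and last: "v (2 * m) \<in> S"
  shows "cycle_edges (2 * m + 1) v \<in> decode_cycle ` cycle_codes E B S m"
proof -
  define w where "w = (\<lambda>i. v (2 * i))"
  define e where "e = {v (2 * m - 2), v 0}"
  obtain \<sigma> ab where \<sigma>: "\<sigma> \<in> (\<Pi>\<^sub>E f\<in>path_edges m w. tumor_of E B S f)"
    and ab: "ab \<in> tumor_adjacent_pairs E B S e"
    and cycle: "cycle_edges (2 * m + 1) v = detour e ab \<union> subdivision (path_edges m w) \<sigma>"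
    using good_labelling_detour[OF tg bn v _ last] m unfolding w_def e_def by auto
  define k where "k = m - 1"
  have k: "m = Suc k" "k \<ge> 2"
    using m unfolding k_def by auto
  have w_eq: "w i = w j \<longleftrightarrow> i = j" if "i \<le> k" "j \<le> k" for i j
    using good_labellingD(1)[OF v] that k unfolding w_def by simp
  have e_w: "e = {w k, w 0}"
    unfolding e_def w_def k(1) by simp
  have "e \<notin> path_edges m w"
  proof
    assume "e \<in> path_edges m w"
    then obtain j where j: "j < k" "{w j, w (Suc j)} = {w k, w 0}"
      unfolding k(1) path_edges_Suc_eq_image e_w by auto
    then have "w j = w k \<and> w (Suc j) = w 0 \<or> w j = w 0 \<and> w (Suc j) = w k"
      by (metis doubleton_eq_iff)
    then show False
      using j k by (simp add: w_eq)
  qed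
  moreover have C: "cycle_edges m w = insert e (path_edges m w)"
    unfolding e_w k(1) by (rule cycle_edges_Suc)
  ultimately have C_e: "cycle_edges m w - {e} = path_edges m w"
    by simp
  have "cycle_edges m w \<in> cycle_copies B m"
  proof -
    have "inj_on w {0..<m}"
      by (rule inj_onI) (use k in \<open>simp add: w_eq\<close>)
    moreover have "w ` {0..<m} \<subseteq> B"
      using good_labellingD(3)[OF v] unfolding w_def by auto
    ultimately show ?thesis
      unfolding cycle_copies_def by blast
  qed
  then have "(cycle_edges m w, e, \<sigma>, ab) \<in> cycle_codes E B S m"
    unfolding cycle_codes_def using \<sigma> ab C C_e by simp
  moreover have "decode_cycle (cycle_edges m w, e, \<sigma>, ab) = cycle_edges (2 * m + 1) v"
    unfolding decode_cycle_def cycle by (simp add: C_e)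
  ultimately show ?thesis
    by (metis image_eqI)
qed

lemma good_pentagon_closing_in_S:
  assumes tg: "tumor_graph V E B S" and bn: "benign V E B S" and v: "good_labelling V E B S 2 v"
    and last: "v 4 \<in> S"
  shows "cycle_edges 5 v \<in> decode_edge ` edge_codes E B S"
proof -
  define e where "e = {v 2, v 0}"
  obtain \<sigma> ab where \<sigma>: "\<sigma> \<in> (\<Pi>\<^sub>E f\<in>path_edges 2 (\<lambda>i. v (2 * i)). tumor_of E B S f)"
    and ab: "ab \<in> tumor_adjacent_pairs E B S e"
    and cycle: "cycle_edges 5 v = detour e ab \<union> subdivision (path_edges 2 (\<lambda>i. v (2 * i))) \<sigma>"
    using good_labelling_detour[OF tg bn v _ ] last unfolding e_def by auto
  have P: "path_edges 2 (\<lambda>i. v (2 * i)) = {e}"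
    unfolding e_def path_edges_def by (auto simp: insert_commute numeral_2_eq_2)
  have "v 2 \<noteq> v 0" "v 2 \<in> B" "v 0 \<in> B"
    using good_labellingD(1,3)[OF v] by auto
  then have "e \<in> complete_edges B"
    unfolding e_def complete_edges_def by simp
  moreover have "\<sigma> e \<in> tumor_of E B S e"
    using \<sigma> unfolding P by auto
  ultimately have "(e, \<sigma> e, ab) \<in> edge_codes E B S"
    unfolding edge_codes_def using ab by simp
  moreover have "decode_edge (e, \<sigma> e, ab) = cycle_edges 5 v"
    unfolding decode_edge_def cycle P subdivision_def by simp
  ultimately show ?thesis
    by (metis image_eqI)
qed

lemma good_cycles_subset_codes:
  assumes tg: "tumor_graph V E B S" and bn: "benign V E B S" and m: "m \<ge> 3"
  shows "good_cycles V E B S m \<subseteq> decode_path ` path_codes E B S m \<union> decode_cycle ` cycle_codes E B S m"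
proof
  fix C
  assume "C \<in> good_cycles V E B S m"
  then obtain v where C: "C = cycle_edges (2 * m + 1) v" and v: "good_labelling V E B S m v"
    unfolding good_cycles_eq by blast
  have "v (2 * m) \<in> B \<or> v (2 * m) \<in> S"
    using good_labellingD(2)[OF v, of "2 * m"] tumor_graphD(4)[OF tg] by auto
  then show "C \<in> decode_path ` path_codes E B S m \<union> decode_cycle ` cycle_codes E B S m"
    using good_cycle_closing_in_B[OF tg v] good_cycle_closing_in_S[OF tg bn v m] m C by auto
qed

lemma good_pentagons_subset_codes:
  assumes tg: "tumor_graph V E B S" and bn: "benign V E B S"
  shows "good_cycles V E B S 2 \<subseteq> decode_path ` path_codes E B S 2 \<union> decode_edge ` edge_codes E B S"
proof
  fix C
  assume "C \<in> good_cycles V E B S 2"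
  then obtain v where C: "C = cycle_edges 5 v" and v: "good_labelling V E B S 2 v"
    unfolding good_cycles_eq by auto
  have "v 4 \<in> B \<or> v 4 \<in> S"
    using good_labellingD(2)[OF v, of 4] tumor_graphD(4)[OF tg] by auto
  then show "C \<in> decode_path ` path_codes E B S 2 \<union> decode_edge ` edge_codes E B S"
    using good_cycle_closing_in_B[OF tg v, of ] good_pentagon_closing_in_S[OF tg bn v] C by auto
qed

section \<open>Counting codes\<close>

lemma path_copies_props:
  assumes "P \<in> path_copies B (Suc m)"
  shows "finite P" "P \<subseteq> complete_edges B" "card P \<le> m"
proof -
  obtain w where w: "P = path_edges (Suc m) w" "inj_on w {0..<Suc m}" "w ` {0..<Suc m} \<subseteq> B"
    using assms unfolding path_copies_def by blast
  have P: "P = (\<lambda>i. {w i, w (Suc i)}) ` {..<m}"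
    using w(1) path_edges_Suc_eq_image by simp
  show "finite P" "card P \<le> m"
    unfolding P using card_image_le[of "{..<m}"] by simp_all
  show "P \<subseteq> complete_edges B"
  proof
    fix f
    assume "f \<in> P"
    then obtain i where i: "i < m" "f = {w i, w (Suc i)}"
      using P by blast
    have "w i \<noteq> w (Suc i)"
      using i by (simp add: inj_on_eq_iff[OF w(2)])
    moreover have "w i \<in> B" "w (Suc i) \<in> B"
      using w(3) i by auto
    ultimately show "f \<in> complete_edges B"
      using i unfolding complete_edges_def by auto
  qed
qed

lemma cycle_copies_props:
  assumes "C \<in> cycle_copies B m" "m \<ge> 2"
  shows "finite C" "C \<subseteq> complete_edges B" "card C \<le> m"
proof -
  obtain w where w: "C = cycle_edges m w" "inj_on w {0..<m}" "w ` {0..<m} \<subseteq> B"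
    using assms unfolding cycle_copies_def by blast
  have C: "C = (\<lambda>i. {w i, w ((i + 1) mod m)}) ` {..<m}"
    using w(1) unfolding cycle_edges_def by auto
  show "finite C" "card C \<le> m"
    unfolding C using card_image_le[of "{..<m}"] by simp_all
  show "C \<subseteq> complete_edges B"
  proof
    fix f
    assume "f \<in> C"
    then obtain i where i: "i < m" "f = {w i, w ((i + 1) mod m)}"
      using C by blast
    have "i \<noteq> (i + 1) mod m"
    proof (cases "i + 1 < m")
      case False
      then have "i + 1 = m"
        using i by simp
      then show ?thesis
        using assms(2) by auto
    qed simp
    then have "w i \<noteq> w ((i + 1) mod m)"
      using i by (simp add: inj_on_eq_iff[OF w(2)])
    moreover have "w i \<in> B" "w ((i + 1) mod m) \<in> B"
      using w(3) i by auto
    ultimately show "f \<in> complete_edges B"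
      using i unfolding complete_edges_def by auto
  qed
qed

lemma finite_complete_edges: "finite B \<Longrightarrow> finite (complete_edges B)"
  unfolding complete_edges_def by (rule finite_subset[of _ "Pow B"]) auto

lemma finite_path_copies: "finite B \<Longrightarrow> finite (path_copies B k)"
  by (rule finite_subset[of _ "Pow (Pow B)"]) (auto simp: path_copies_def path_edges_def)

lemma finite_cycle_copies: "finite B \<Longrightarrow> finite (cycle_copies B k)"
  by (rule finite_subset[of _ "Pow (Pow B)"]) (fastforce simp: cycle_copies_def cycle_edges_def)+

lemma finite_path_codes: "finite B \<Longrightarrow> finite S \<Longrightarrow> finite (path_codes E B S m)"
  unfolding path_codes_def using path_copies_props(1)
  by (auto intro!: finite_SigmaI finite_PiE finite_path_copies finite_tumor_of)

lemma finite_cycle_codes: "finite B \<Longrightarrow> finite S \<Longrightarrow> m \<ge> 2 \<Longrightarrow> finite (cycle_codes E B S m)"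
  unfolding cycle_codes_def using cycle_copies_props(1)
  by (auto intro!: finite_SigmaI finite_PiE finite_cartesian_product finite_cycle_copies
      finite_tumor_of finite_tumor_adjacent_pairs)

lemma finite_edge_codes: "finite B \<Longrightarrow> finite S \<Longrightarrow> finite (edge_codes E B S)"
  unfolding edge_codes_def
  by (auto intro!: finite_SigmaI finite_cartesian_product finite_complete_edges
      finite_tumor_of finite_tumor_adjacent_pairs)

definition tumor_vertices :: "'a set set \<Rightarrow> 'a set \<Rightarrow> 'a set \<Rightarrow> 'a set" where
  "tumor_vertices E B S = {s \<in> S. nbrs E s \<inter> B \<in> complete_edges B}"

text \<open>The edge measure of the theorem: the base edge of a uniformly random tumor vertex, so that
  the mass of an edge is proportional to the size of the tumor over it.\<close>

definition tumor_pmf :: "'a set set \<Rightarrow> 'a set \<Rightarrow> 'a set \<Rightarrow> 'a set pmf" where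
  "tumor_pmf E B S = map_pmf (\<lambda>s. nbrs E s \<inter> B) (pmf_of_set (tumor_vertices E B S))"

lemma tumor_of_subset_tumor_vertices:
  "e \<in> complete_edges B \<Longrightarrow> tumor_of E B S e \<subseteq> tumor_vertices E B S"
  unfolding tumor_of_def tumor_vertices_def by auto

lemma pmf_tumor_pmf:
  assumes "finite S" "tumor_vertices E B S \<noteq> {}" "e \<in> complete_edges B"
  shows "pmf (tumor_pmf E B S) e = card (tumor_of E B S e) / card (tumor_vertices E B S)"
proof -
  have fin: "finite (tumor_vertices E B S)"
    using assms(1) unfolding tumor_vertices_def by simp
  have "pmf (tumor_pmf E B S) e
      = measure (pmf_of_set (tumor_vertices E B S)) ((\<lambda>s. nbrs E s \<inter> B) -` {e})"
    unfolding tumor_pmf_def by (rule pmf_map)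
  also have "\<dots> = card (tumor_vertices E B S \<inter> (\<lambda>s. nbrs E s \<inter> B) -` {e})
      / card (tumor_vertices E B S)"
    using assms(2) fin by (rule measure_pmf_of_set)
  also have "tumor_vertices E B S \<inter> (\<lambda>s. nbrs E s \<inter> B) -` {e} = tumor_of E B S e"
    unfolding tumor_vertices_def tumor_of_def using assms(3) by auto
  finally show ?thesis .
qed

lemma set_pmf_tumor_pmf:
  assumes "finite S" "tumor_vertices E B S \<noteq> {}"
  shows "set_pmf (tumor_pmf E B S) \<subseteq> complete_edges B"
proof -
  have "finite (tumor_vertices E B S)"
    using assms(1) unfolding tumor_vertices_def by simp
  then show ?thesis
    using assms(2) unfolding tumor_pmf_def by (auto simp: tumor_vertices_def)
qed

lemma tumor_product_le:
  assumes S: "finite S" "tumor_vertices E B S \<noteq> {}" "card (tumor_vertices E B S) \<le> n"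
    and P: "finite P" "P \<subseteq> complete_edges B" "card P \<le> k"
  shows "real (\<Prod>f\<in>P. card (tumor_of E B S f)) \<le> real n ^ k * (\<Prod>f\<in>P. pmf (tumor_pmf E B S) f)"
proof -
  define T where "T = card (tumor_vertices E B S)"
  have T: "T > 0"
    using S(1,2) unfolding T_def by (simp add: card_gt_0_iff tumor_vertices_def)
  have "real (\<Prod>f\<in>P. card (tumor_of E B S f)) = (\<Prod>f\<in>P. real T * pmf (tumor_pmf E B S) f)"
    unfolding of_nat_prod T_def
    by (rule prod.cong) (use P(2) T in \<open>auto simp: pmf_tumor_pmf[OF S(1,2)] T_def\<close>)
  also have "\<dots> = real T ^ card P * (\<Prod>f\<in>P. pmf (tumor_pmf E B S) f)"
    by (simp add: prod.distrib)
  also have "\<dots> \<le> real n ^ k * (\<Prod>f\<in>P. pmf (tumor_pmf E B S) f)"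
  proof (rule mult_right_mono)
    have "real T ^ card P \<le> real T ^ k"
      using T P(3) by (intro power_increasing) auto
    also have "\<dots> \<le> real n ^ k"
      using S(3) unfolding T_def by (intro power_mono) auto
    finally show "real T ^ card P \<le> real n ^ k" .
  qed (simp add: prod_nonneg)
  finally show ?thesis .
qed

lemma card_tumor_vertices_le:
  assumes "tumor_graph V E B S"
  shows "card (tumor_vertices E B S) \<le> card V"
  using tumor_graphD(1,3)[OF assms] unfolding tumor_vertices_def
  by (intro card_mono) auto

lemma card_path_codes_le:
  assumes tg: "tumor_graph V E B S" and ne: "tumor_vertices E B S \<noteq> {}"
  shows "real (card (path_codes E B S m))
    \<le> real (card V) ^ m * beta (tumor_pmf E B S) (path_copies B (Suc m))"
proof -
  note fin = tumor_graph_finite[OF tg]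
  have "card (path_codes E B S m) = (\<Sum>P\<in>path_copies B (Suc m). \<Prod>f\<in>P. card (tumor_of E B S f))"
    unfolding path_codes_def using finite_path_copies[OF fin(1)] path_copies_props(1)
    by (subst card_SigmaI) (auto intro!: finite_PiE sum.cong simp: finite_tumor_of fin card_PiE)
  then have "real (card (path_codes E B S m))
      = (\<Sum>P\<in>path_copies B (Suc m). real (\<Prod>f\<in>P. card (tumor_of E B S f)))"
    by simp
  also have "\<dots> \<le> (\<Sum>P\<in>path_copies B (Suc m). real (card V) ^ m * (\<Prod>f\<in>P. pmf (tumor_pmf E B S) f))"
    by (intro sum_mono tumor_product_le[OF fin(2) ne card_tumor_vertices_le[OF tg]])
      (auto dest: path_copies_props)
  also have "\<dots> = real (card V) ^ m * beta (tumor_pmf E B S) (path_copies B (Suc m))"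
    unfolding beta_def by (simp add: sum_distrib_left)
  finally show ?thesis .
qed

lemma card_cycle_code_fibre_le:
  assumes tg: "tumor_graph V E B S" and pl: "planar_graph V E"
    and C: "C \<in> cycle_copies B m" and m: "m \<ge> 2"
  shows "card (SIGMA e:C. (\<Pi>\<^sub>E f\<in>C - {e}. tumor_of E B S f) \<times> tumor_adjacent_pairs E B S e)
    \<le> 2 * m * (\<Prod>f\<in>C. card (tumor_of E B S f))"
proof -
  let ?t = "\<lambda>f. card (tumor_of E B S f)"
  note fin = tumor_graph_finite[OF tg] and Cp = cycle_copies_props[OF C m]
  have "card (SIGMA e:C. (\<Pi>\<^sub>E f\<in>C - {e}. tumor_of E B S f) \<times> tumor_adjacent_pairs E B S e)
      = (\<Sum>e\<in>C. (\<Prod>f\<in>C - {e}. ?t f) * card (tumor_adjacent_pairs E B S e))"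
    using Cp(1) by (simp add: card_SigmaI finite_PiE finite_tumor_of finite_tumor_adjacent_pairs fin
        card_PiE card_cartesian_product)
  also have "\<dots> \<le> (\<Sum>e\<in>C. 2 * (\<Prod>f\<in>C. ?t f))"
  proof (rule sum_mono)
    fix e
    assume e: "e \<in> C"
    then have "e \<subseteq> B" "card e = 2"
      using Cp(2) unfolding complete_edges_def by auto
    then have "(\<Prod>f\<in>C - {e}. ?t f) * card (tumor_adjacent_pairs E B S e)
        \<le> (\<Prod>f\<in>C - {e}. ?t f) * (2 * ?t e)"
      by (intro mult_left_mono card_tumor_adjacent_pairs_le[OF tg pl]) auto
    also have "\<dots> = 2 * (\<Prod>f\<in>C. ?t f)"
      using prod.remove[OF Cp(1) e, of ?t] by simp
    finally show "(\<Prod>f\<in>C - {e}. ?t f) * card (tumor_adjacent_pairs E B S e) \<le> 2 * (\<Prod>f\<in>C. ?t f)" .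
  qed
  also have "\<dots> \<le> 2 * m * (\<Prod>f\<in>C. ?t f)"
    using Cp(3) by (simp add: mult_right_mono)
  finally show ?thesis .
qed

lemma card_cycle_codes_le:
  assumes tg: "tumor_graph V E B S" and pl: "planar_graph V E"
    and ne: "tumor_vertices E B S \<noteq> {}" and m: "m \<ge> 2"
  shows "real (card (cycle_codes E B S m))
    \<le> 2 * real m * real (card V) ^ m * beta (tumor_pmf E B S) (cycle_copies B m)"
proof -
  let ?t = "\<lambda>f. card (tumor_of E B S f)"
  note fin = tumor_graph_finite[OF tg] and Cp = cycle_copies_props[OF _ m]
  have "card (cycle_codes E B S m) = (\<Sum>C\<in>cycle_copies B m. card (SIGMA e:C.
      (\<Pi>\<^sub>E f\<in>C - {e}. tumor_of E B S f) \<times> tumor_adjacent_pairs E B S e))"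
    unfolding cycle_codes_def using finite_cycle_copies[OF fin(1)] Cp(1)
    by (intro card_SigmaI) (auto intro!: finite_SigmaI finite_PiE finite_cartesian_product
        simp: finite_tumor_of finite_tumor_adjacent_pairs fin)
  also have "\<dots> \<le> (\<Sum>C\<in>cycle_copies B m. 2 * m * (\<Prod>f\<in>C. ?t f))"
    by (intro sum_mono card_cycle_code_fibre_le[OF tg pl _ m])
  finally have "real (card (cycle_codes E B S m))
      \<le> real (\<Sum>C\<in>cycle_copies B m. 2 * m * (\<Prod>f\<in>C. ?t f))"
    by (simp only: of_nat_le_iff)
  also have "\<dots> = (\<Sum>C\<in>cycle_copies B m. 2 * real m * real (\<Prod>f\<in>C. ?t f))"
    by (simp only: of_nat_sum of_nat_mult of_nat_numeral)
  also have "\<dots> \<le> (\<Sum>C\<in>cycle_copies B m.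
      2 * real m * (real (card V) ^ m * (\<Prod>f\<in>C. pmf (tumor_pmf E B S) f)))"
    by (intro sum_mono mult_left_mono tumor_product_le[OF fin(2) ne card_tumor_vertices_le[OF tg]])
      (auto dest: Cp)
  also have "\<dots> = 2 * real m * real (card V) ^ m * beta (tumor_pmf E B S) (cycle_copies B m)"
    unfolding beta_def by (simp add: sum_distrib_left mult.assoc)
  finally show ?thesis .
qed

lemma card_edge_codes_le:
  assumes tg: "tumor_graph V E B S" and pl: "planar_graph V E" and ne: "tumor_vertices E B S \<noteq> {}"
  shows "real (card (edge_codes E B S))
    \<le> 2 * (\<Sum>e\<in>set_pmf (tumor_pmf E B S). (pmf (tumor_pmf E B S) e)^2) * real (card V) ^ 2"
proof -
  let ?t = "\<lambda>f. card (tumor_of E B S f)" and ?\<mu> = "tumor_pmf E B S"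
  note fin = tumor_graph_finite[OF tg]
  have "card (edge_codes E B S) = (\<Sum>e\<in>complete_edges B. ?t e * card (tumor_adjacent_pairs E B S e))"
    unfolding edge_codes_def using finite_complete_edges[OF fin(1)]
    by (simp add: card_SigmaI finite_tumor_of finite_tumor_adjacent_pairs fin card_cartesian_product)
  also have "\<dots> \<le> (\<Sum>e\<in>complete_edges B. 2 * ?t e ^ 2)"
    using card_tumor_adjacent_pairs_le[OF tg pl]
    by (intro sum_mono) (auto simp: complete_edges_def power2_eq_square)
  finally have "real (card (edge_codes E B S)) \<le> real (\<Sum>e\<in>complete_edges B. 2 * ?t e ^ 2)"
    by (simp only: of_nat_le_iff)
  also have "\<dots> = (\<Sum>e\<in>complete_edges B. 2 * real (?t e) ^ 2)"
    by (simp only: of_nat_sum of_nat_mult of_nat_numeral of_nat_power)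
  also have "\<dots> \<le> (\<Sum>e\<in>complete_edges B. 2 * (real (card V) * pmf ?\<mu> e) ^ 2)"
  proof (intro sum_mono mult_left_mono power_mono)
    fix e
    assume "e \<in> complete_edges B"
    then show "real (?t e) \<le> real (card V) * pmf ?\<mu> e"
      using tumor_product_le[OF fin(2) ne card_tumor_vertices_le[OF tg], of "{e}" 1] by simp
  qed auto
  also have "\<dots> = 2 * (\<Sum>e\<in>complete_edges B. pmf ?\<mu> e ^ 2) * real (card V) ^ 2"
    by (simp add: sum_distrib_left sum_distrib_right power_mult_distrib algebra_simps)
  also have "(\<Sum>e\<in>complete_edges B. pmf ?\<mu> e ^ 2) = (\<Sum>e\<in>set_pmf ?\<mu>. pmf ?\<mu> e ^ 2)"
    using set_pmf_tumor_pmf[OF fin(2) ne] finite_complete_edges[OF fin(1)]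
    by (intro sum.mono_neutral_right) (auto simp: set_pmf_iff)
  finally show ?thesis .
qed

lemma cyc_le:
  assumes tg: "tumor_graph V E B S" and bn: "benign V E B S" and pl: "planar_graph V E"
    and ne: "tumor_vertices E B S \<noteq> {}" and m: "m \<ge> 3"
  shows "real (cyc V E B S m) \<le> (2 * real m * beta (tumor_pmf E B S) (cycle_copies B m)
    + beta (tumor_pmf E B S) (path_copies B (m + 1))) * real (card V) ^ m"
proof -
  note fin = tumor_graph_finite[OF tg]
  have "cyc V E B S m \<le> card (decode_path ` path_codes E B S m \<union> decode_cycle ` cycle_codes E B S m)"
    unfolding cyc_def using good_cycles_subset_codes[OF tg bn m] finite_cycle_codes[OF fin] m
    by (intro card_mono) (auto intro: finite_path_codes fin)
  also have "\<dots> \<le> card (path_codes E B S m) + card (cycle_codes E B S m)"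
    using m by (intro card_Un_le[THEN order_trans] add_mono card_image_le
        finite_path_codes finite_cycle_codes fin) auto
  finally show ?thesis
    using card_path_codes_le[OF tg ne, of m] card_cycle_codes_le[OF tg pl ne, of m] m
    by (simp add: algebra_simps)
qed

lemma cyc_pentagon_le:
  assumes tg: "tumor_graph V E B S" and bn: "benign V E B S" and pl: "planar_graph V E"
    and ne: "tumor_vertices E B S \<noteq> {}"
  shows "real (cyc V E B S 2) \<le> (2 * (\<Sum>e\<in>set_pmf (tumor_pmf E B S). (pmf (tumor_pmf E B S) e)^2)
    + beta (tumor_pmf E B S) (path_copies B 3)) * real (card V) ^ 2"
proof -
  note fin = tumor_graph_finite[OF tg]
  have "cyc V E B S 2 \<le> card (decode_path ` path_codes E B S 2 \<union> decode_edge ` edge_codes E B S)"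
    unfolding cyc_def using good_pentagons_subset_codes[OF tg bn]
    by (intro card_mono) (auto intro: finite_path_codes finite_edge_codes fin)
  also have "\<dots> \<le> card (path_codes E B S 2) + card (edge_codes E B S)"
    by (intro card_Un_le[THEN order_trans] add_mono card_image_le
        finite_path_codes finite_edge_codes fin)
  finally show ?thesis
    using card_path_codes_le[OF tg ne, of 2] card_edge_codes_le[OF tg pl ne]
    by (simp add: algebra_simps numeral_3_eq_3)
qed

lemma good_cycles_eq_empty:
  assumes tg: "tumor_graph V E B S" and "tumor_vertices E B S = {}" and "m \<ge> 2"
  shows "good_cycles V E B S m = {}"
proof -
  have False if v: "good_labelling V E B S m v" for v
  proof -
    have "v 0 \<in> B" "v 2 \<in> B" "v 0 \<noteq> v 2" "v 1 \<in> S"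
      using good_labellingD(1,3,4)[OF v] assms(3) by auto
    moreover have "{v 0, v 1} \<in> E" "{v 2, v 1} \<in> E"
      using good_labellingD(5)[OF v, of 0] good_labellingD(5)[OF v, of 1] assms(3)
      by (simp_all add: numeral_2_eq_2 insert_commute)
    ultimately have "v 1 \<in> tumor_of E B S {v 0, v 2}" "{v 0, v 2} \<in> complete_edges B"
      using mem_tumor_of[OF tg] unfolding complete_edges_def by auto
    then show False
      using tumor_of_subset_tumor_vertices assms(2) by blast
  qed
  then show ?thesis
    unfolding good_cycles_eq by blast
qed

lemma beta_nonneg: "beta \<mu> Hs \<ge> 0"
  unfolding beta_def by (intro sum_nonneg prod_nonneg) auto

theorem lemma3p7:
  fixes V :: "'a set" and E :: "'a set set" and B S :: "'a set"
  assumes "tumor_graph V E B S"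
    and "benign V E B S"
    and "planar_graph V E"
    and "card B \<ge> 2"
  shows "\<exists>\<mu> :: 'a set pmf. set_pmf \<mu> \<subseteq> complete_edges B \<and>
     real (cyc V E B S 2) \<le>
       (2 * (\<Sum>e\<in>set_pmf \<mu>. (pmf \<mu> e)^2) + beta \<mu> (path_copies B 3)) * (real (card V))^2 \<and>
     (\<forall>m\<ge>3. real (cyc V E B S m) \<le>
       (2 * real m * beta \<mu> (cycle_copies B m) + beta \<mu> (path_copies B (m+1))) * (real (card V))^m)"
proof (cases "tumor_vertices E B S = {}")
  case True
  obtain e where e: "e \<subseteq> B" "card e = 2"
    using obtain_subset_with_card_n[OF assms(4)] by blast
  have "cyc V E B S m = 0" if "m \<ge> 2" for m
    unfolding cyc_def using good_cycles_eq_empty[OF assms(1) True that] by simp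
  then show ?thesis
    using e by (intro exI[of _ "return_pmf e"])
      (auto simp: complete_edges_def beta_nonneg intro!: add_nonneg_nonneg)
next
  case False
  then show ?thesis
    using set_pmf_tumor_pmf[OF tumor_graph_finite(2)[OF assms(1)]]
      cyc_pentagon_le[OF assms(1-3)] cyc_le[OF assms(1-3)]
    by (intro exI[of _ "tumor_pmf E B S"]) auto
qed

end
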